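(* Every strictly supersolvable locally geometric poset is inductive.
   Context: All posets are finite, have a unique minimal element $\hat 0$, and are ranked (for every $x$ all maximal chains with top $x$ have the same length $\operatorname{rk}(x)$); $\operatorname{rk}(\mathcal{P}):=\max_x\operatorname{rk}(x)$. Characteristic polynomial: $\chi_{\mathcal{P}}(t)=\sum_{x}\mu(\hat0,x)t^{\operatorname{rk}(\mathcal{P})-\operatorname{rk}(x)}$, $\mu$ the Möbius function. $A(\mathcal{P})$ is the set of atoms (rank-1 elements). For $T\subseteq\mathcal{P}$, $\bigvee T$ is the set of minimal upper bounds of $T$; $x\vee y:=\bigvee\{x,y\}$. A lattice is geometric if for all $x,y$: $y$ covers $x$ iff there is an atom $a\not\le x$ with $y=x\vee a$. $\mathcal{P}$ is locally geometric if every $\mathcal{P}_{\le x}$ is a geometric lattice. An element $x$ of a geometric lattice $L$ is modular if $x\wedge(y\vee z)=(x\wedge y)\vee z$ for all $z\le x$, $y\in L$. For $B\subseteq A(\mathcal{P})$, $\mathcal{P}(B)$ is the subposet consisting of $\hat 0$ and all elements of $\bigvee T$ for nonempty $T\subseteq B$. An order ideal $\mathcal{Q}$ is pure if all its maximal elements have the same rank, and join-closed if $T\subseteq\mathcal{Q}$ implies $\bigvee T\subseteq\mathcal{Q}$. An M-ideal of a locally geometric $\mathcal{P}$ is a pure, join-closed order ideal $\mathcal{Q}$ with (1) $|a\vee y|\ge1$ for all $y\in\mathcal{Q}$, $a\in A(\mathcal{P})\setminus A(\mathcal{Q})$, and (2) for every maximal $x\in\mathcal{P}$ there is a maximal $y\in\mathcal{Q}$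 that is modular in $\mathcal{P}_{\le x}$. A TM-ideal is an M-ideal satisfying the stronger (1* ) $|a\vee y|=1$ for all such $y,a$. $\mathcal{P}$ is strictly supersolvable if there is a chain $\{\hat0\}=\mathcal{Q}_0\subsetneq\mathcal{Q}_1\subsetneq\cdots\subsetneq\mathcal{Q}_r=\mathcal{P}$ with each $\mathcal{Q}_i$ a TM-ideal of $\mathcal{Q}_{i+1}$ and $\operatorname{rk}(\mathcal{Q}_i)=i$. For an atom $a$, let $\mathcal{P}':=\mathcal{P}(A(\mathcal{P})\setminus\{a\})$ and $\mathcal{P}'':=\mathcal{P}_{\ge a}$ (minimal element $a$, rank function $\operatorname{rk}-1$). The class of inductive posets is the smallest class of locally geometric posets such that (1) $\{\hat0\}$ is inductive, and (2) $\mathcal{P}$ is inductive whenever there is an atom $a$ with $\mathcal{P}''$ and $\mathcal{P}'$ inductive and $\chi_{\mathcal{P}''}(t)$ dividing $\chi_{\mathcal{P}'}(t)$. *)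

theory Defs
  imports "HOL-Computational_Algebra.Polynomial"
begin

text \<open>A poset is given by a carrier set P together with an order relation le
(only its restriction to P matters).  Subposets (order ideals, P(B), P_{>=a})
are subsets of the carrier with the restricted order.\<close>

definition lt :: "('a \<Rightarrow> 'a \<Rightarrow> bool) \<Rightarrow> 'a \<Rightarrow> 'a \<Rightarrow> bool" where
  "lt le x y \<longleftrightarrow> le x y \<and> x \<noteq> y"

definition covers :: "('a \<Rightarrow> 'a \<Rightarrow> bool) \<Rightarrow> 'a set \<Rightarrow> 'a \<Rightarrow> 'a \<Rightarrow> bool" where
  "covers le P x y \<longleftrightarrow> x \<in> P \<and> y \<in> P \<and> lt le x y \<and> \<not> (\<exists>z\<in>P. lt le x z \<and> lt le z y)"

definition minimal_elems :: "('a \<Rightarrow> 'a \<Rightarrow> bool) \<Rightarrow> 'a set \<Rightarrow> 'a set" where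
  "minimal_elems le P = {x\<in>P. \<not> (\<exists>y\<in>P. lt le y x)}"

definition maximal_elems :: "('a \<Rightarrow> 'a \<Rightarrow> bool) \<Rightarrow> 'a set \<Rightarrow> 'a set" where
  "maximal_elems le P = {x\<in>P. \<not> (\<exists>y\<in>P. lt le x y)}"

definition bot :: "('a \<Rightarrow> 'a \<Rightarrow> bool) \<Rightarrow> 'a set \<Rightarrow> 'a" where
  "bot le P = (THE z. z \<in> minimal_elems le P)"

definition satchain :: "('a \<Rightarrow> 'a \<Rightarrow> bool) \<Rightarrow> 'a set \<Rightarrow> 'a list \<Rightarrow> 'a \<Rightarrow> bool" where
  "satchain le P cs x \<longleftrightarrow> cs \<noteq> [] \<and> hd cs = bot le P \<and> last cs = x \<and> set cs \<subseteq> P \<and>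
     (\<forall>i. Suc i < length cs \<longrightarrow> covers le P (cs ! i) (cs ! Suc i))"

definition is_poset :: "('a \<Rightarrow> 'a \<Rightarrow> bool) \<Rightarrow> 'a set \<Rightarrow> bool" where
  "is_poset le P \<longleftrightarrow> finite P \<and>
     (\<forall>x\<in>P. le x x) \<and>
     (\<forall>x\<in>P. \<forall>y\<in>P. le x y \<and> le y x \<longrightarrow> x = y) \<and>
     (\<forall>x\<in>P. \<forall>y\<in>P. \<forall>z\<in>P. le x y \<and> le y z \<longrightarrow> le x z) \<and>
     (\<exists>!z. z \<in> minimal_elems le P) \<and>
     (\<forall>x\<in>P. \<forall>cs ds. satchain le P cs x \<and> satchain le P ds x \<longrightarrow> length cs = length ds)"

definition rk :: "('a \<Rightarrow> 'a \<Rightarrow> bool) \<Rightarrow> 'a set \<Rightarrow> 'a \<Rightarrow> nat" where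
  "rk le P x = (SOME n. \<exists>cs. satchain le P cs x \<and> length cs = Suc n)"

definition rank :: "('a \<Rightarrow> 'a \<Rightarrow> bool) \<Rightarrow> 'a set \<Rightarrow> nat" where
  "rank le P = Max (rk le P ` P)"

definition is_mobius :: "('a \<Rightarrow> 'a \<Rightarrow> bool) \<Rightarrow> 'a set \<Rightarrow> ('a \<Rightarrow> 'a \<Rightarrow> int) \<Rightarrow> bool" where
  "is_mobius le P m \<longleftrightarrow>
     (\<forall>x y. (x \<notin> P \<or> y \<notin> P) \<longrightarrow> m x y = 0) \<and>
     (\<forall>x\<in>P. \<forall>y\<in>P. m x y =
        (if x = y then 1
         else if lt le x y then - (\<Sum>z\<in>{z\<in>P. le x z \<and> lt le z y}. m x z)
         else 0))"

definition mobius :: "('a \<Rightarrow> 'a \<Rightarrow> bool) \<Rightarrow> 'a set \<Rightarrow> 'a \<Rightarrow> 'a \<Rightarrow> int" where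
  "mobius le P = (THE m. is_mobius le P m)"

definition charpoly :: "('a \<Rightarrow> 'a \<Rightarrow> bool) \<Rightarrow> 'a set \<Rightarrow> int poly" where
  "charpoly le P = (\<Sum>x\<in>P. monom (mobius le P (bot le P) x) (rank le P - rk le P x))"

definition atoms :: "('a \<Rightarrow> 'a \<Rightarrow> bool) \<Rightarrow> 'a set \<Rightarrow> 'a set" where
  "atoms le P = {x\<in>P. rk le P x = 1}"

definition upper_bounds :: "('a \<Rightarrow> 'a \<Rightarrow> bool) \<Rightarrow> 'a set \<Rightarrow> 'a set \<Rightarrow> 'a set" where
  "upper_bounds le P T = {u\<in>P. \<forall>t\<in>T. le t u}"

definition joins :: "('a \<Rightarrow> 'a \<Rightarrow> bool) \<Rightarrow> 'a set \<Rightarrow> 'a set \<Rightarrow> 'a set" where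
  "joins le P T = minimal_elems le (upper_bounds le P T)"

definition is_lub :: "('a \<Rightarrow> 'a \<Rightarrow> bool) \<Rightarrow> 'a set \<Rightarrow> 'a set \<Rightarrow> 'a \<Rightarrow> bool" where
  "is_lub le L T s \<longleftrightarrow> s \<in> L \<and> (\<forall>t\<in>T. le t s) \<and> (\<forall>u\<in>L. (\<forall>t\<in>T. le t u) \<longrightarrow> le s u)"

definition is_glb :: "('a \<Rightarrow> 'a \<Rightarrow> bool) \<Rightarrow> 'a set \<Rightarrow> 'a set \<Rightarrow> 'a \<Rightarrow> bool" where
  "is_glb le L T s \<longleftrightarrow> s \<in> L \<and> (\<forall>t\<in>T. le s t) \<and> (\<forall>u\<in>L. (\<forall>t\<in>T. le u t) \<longrightarrow> le u s)"

definition join :: "('a \<Rightarrow> 'a \<Rightarrow> bool) \<Rightarrow> 'a set \<Rightarrow> 'a \<Rightarrow> 'a \<Rightarrow> 'a" where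
  "join le L x y = (THE s. is_lub le L {x, y} s)"

definition meet :: "('a \<Rightarrow> 'a \<Rightarrow> bool) \<Rightarrow> 'a set \<Rightarrow> 'a \<Rightarrow> 'a \<Rightarrow> 'a" where
  "meet le L x y = (THE s. is_glb le L {x, y} s)"

definition is_lattice :: "('a \<Rightarrow> 'a \<Rightarrow> bool) \<Rightarrow> 'a set \<Rightarrow> bool" where
  "is_lattice le L \<longleftrightarrow> is_poset le L \<and>
     (\<forall>x\<in>L. \<forall>y\<in>L. (\<exists>s. is_lub le L {x, y} s) \<and> (\<exists>s. is_glb le L {x, y} s))"

definition geometric_lattice :: "('a \<Rightarrow> 'a \<Rightarrow> bool) \<Rightarrow> 'a set \<Rightarrow> bool" where
  "geometric_lattice le L \<longleftrightarrow> is_lattice le L \<and>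
     (\<forall>x\<in>L. \<forall>y\<in>L. covers le L x y \<longleftrightarrow>
        (\<exists>a\<in>atoms le L. \<not> le a x \<and> y = join le L x a))"

definition down :: "('a \<Rightarrow> 'a \<Rightarrow> bool) \<Rightarrow> 'a set \<Rightarrow> 'a \<Rightarrow> 'a set" where
  "down le P x = {y\<in>P. le y x}"

definition up :: "('a \<Rightarrow> 'a \<Rightarrow> bool) \<Rightarrow> 'a set \<Rightarrow> 'a \<Rightarrow> 'a set" where
  "up le P x = {y\<in>P. le x y}"

definition locally_geometric :: "('a \<Rightarrow> 'a \<Rightarrow> bool) \<Rightarrow> 'a set \<Rightarrow> bool" where
  "locally_geometric le P \<longleftrightarrow> is_poset le P \<and> (\<forall>x\<in>P. geometric_lattice le (down le P x))"

definition modular_elem :: "('a \<Rightarrow> 'a \<Rightarrow> bool) \<Rightarrow> 'a set \<Rightarrow> 'a \<Rightarrow> bool" where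
  "modular_elem le L x \<longleftrightarrow> x \<in> L \<and>
     (\<forall>y\<in>L. \<forall>z\<in>L. le z x \<longrightarrow> meet le L x (join le L y z) = join le L (meet le L x y) z)"

definition subposet_gen :: "('a \<Rightarrow> 'a \<Rightarrow> bool) \<Rightarrow> 'a set \<Rightarrow> 'a set \<Rightarrow> 'a set" where
  "subposet_gen le P B = insert (bot le P) (\<Union>{joins le P T | T. T \<subseteq> B \<and> T \<noteq> {}})"

definition order_ideal :: "('a \<Rightarrow> 'a \<Rightarrow> bool) \<Rightarrow> 'a set \<Rightarrow> 'a set \<Rightarrow> bool" where
  "order_ideal le P Q \<longleftrightarrow> Q \<subseteq> P \<and> (\<forall>x\<in>Q. \<forall>y\<in>P. le y x \<longrightarrow> y \<in> Q)"

definition pure :: "('a \<Rightarrow> 'a \<Rightarrow> bool) \<Rightarrow> 'a set \<Rightarrow> bool" where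
  "pure le Q \<longleftrightarrow> (\<forall>x\<in>maximal_elems le Q. \<forall>y\<in>maximal_elems le Q. rk le Q x = rk le Q y)"

definition join_closed :: "('a \<Rightarrow> 'a \<Rightarrow> bool) \<Rightarrow> 'a set \<Rightarrow> 'a set \<Rightarrow> bool" where
  "join_closed le P Q \<longleftrightarrow> (\<forall>T. T \<subseteq> Q \<longrightarrow> joins le P T \<subseteq> Q)"

definition M_ideal :: "('a \<Rightarrow> 'a \<Rightarrow> bool) \<Rightarrow> 'a set \<Rightarrow> 'a set \<Rightarrow> bool" where
  "M_ideal le P Q \<longleftrightarrow> order_ideal le P Q \<and> pure le Q \<and> join_closed le P Q \<and>
     (\<forall>y\<in>Q. \<forall>a\<in>atoms le P - atoms le Q. card (joins le P {a, y}) \<ge> 1) \<and>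
     (\<forall>x\<in>maximal_elems le P. \<exists>y\<in>maximal_elems le Q. modular_elem le (down le P x) y)"

definition TM_ideal :: "('a \<Rightarrow> 'a \<Rightarrow> bool) \<Rightarrow> 'a set \<Rightarrow> 'a set \<Rightarrow> bool" where
  "TM_ideal le P Q \<longleftrightarrow> M_ideal le P Q \<and>
     (\<forall>y\<in>Q. \<forall>a\<in>atoms le P - atoms le Q. card (joins le P {a, y}) = 1)"

definition strictly_supersolvable :: "('a \<Rightarrow> 'a \<Rightarrow> bool) \<Rightarrow> 'a set \<Rightarrow> bool" where
  "strictly_supersolvable le P \<longleftrightarrow>
     (\<exists>Q :: nat \<Rightarrow> 'a set.
        Q 0 = {bot le P} \<and> Q (rank le P) = P \<and>
        (\<forall>i < rank le P. Q i \<subset> Q (Suc i) \<and> TM_ideal le (Q (Suc i)) (Q i)) \<and>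
        (\<forall>i \<le> rank le P. rank le (Q i) = i))"

text \<open>All posets arising are subsets of the carrier with the same order, so the class
  can be generated within a fixed type and order.\<close>
inductive inductive_poset :: "('a \<Rightarrow> 'a \<Rightarrow> bool) \<Rightarrow> 'a set \<Rightarrow> bool" for le where
  base: "le z z \<Longrightarrow> inductive_poset le {z}"
| step: "\<lbrakk> locally_geometric le P; a \<in> atoms le P;
          inductive_poset le (up le P a);
          inductive_poset le (subposet_gen le P (atoms le P - {a}));
          charpoly le (up le P a) dvd charpoly le (subposet_gen le P (atoms le P - {a})) \<rbrakk>
        \<Longrightarrow> inductive_poset le P"

end

theory Submission
  imports Defs
begin

text \<open>
  Let \<open>Q\<close> be the TM-ideal of rank one less than \<open>P\<close> in the chain. Every \<open>x \<notin> Q\<close> lies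
  one rank above a greatest element \<open>proj x\<close> of \<open>Q\<close> below it (this is where the modular
  maximal elements of \<open>Q\<close> enter), and every new atom \<open>b\<close>, i.e. an atom outside \<open>Q\<close>, has a
  unique join with each \<open>w \<in> Q\<close>, one rank above \<open>w\<close>. Hence \<open>w \<mapsto> b \<squnion> w\<close> maps \<open>Q\<close>
  isomorphically onto \<open>P\<^bsub>\<ge>b\<^esub>\<close>, and \<open>\<mu>(x) = -#{new atoms below x} \<mu>(proj x)\<close> yields
  \<open>\<chi>\<^sub>P = (t - #new atoms) \<chi>\<^sub>Q\<close>. All of this is inherited by the subposets \<open>P(B)\<close>
  with \<open>Q \<subseteq> P(B)\<close>, so deleting the new atoms one at a time shows that \<open>P = P(A(P))\<close> is
  inductive as soon as \<open>Q\<close> is, and \<open>Q\<close> is inductive by induction on the rank.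
\<close>

section \<open>Ranked posets\<close>

lemma finite_ex_minimal_wrt:
  assumes "finite S" "S \<noteq> {}"
    and refl: "\<And>x. x \<in> S \<Longrightarrow> r x x"
    and antisym: "\<And>x y. x \<in> S \<Longrightarrow> y \<in> S \<Longrightarrow> r x y \<Longrightarrow> r y x \<Longrightarrow> x = y"
    and trans: "\<And>x y z. x \<in> S \<Longrightarrow> y \<in> S \<Longrightarrow> z \<in> S \<Longrightarrow> r x y \<Longrightarrow> r y z \<Longrightarrow> r x z"
  shows "\<exists>m\<in>S. \<forall>y\<in>S. r y m \<longrightarrow> y = m"
proof -
  define below where "below m = card {z\<in>S. r z m}" for m
  obtain m where m: "m \<in> S" "\<And>y. y \<in> S \<Longrightarrow> below m \<le> below y"
    using arg_min_if_finite(1)[OF assms(1,2)] arg_min_least[OF assms(1,2)] by blast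
  have "y = m" if y: "y \<in> S" "r y m" for y
  proof (rule ccontr)
    assume "y \<noteq> m"
    then have "{z\<in>S. r z y} \<subset> {z\<in>S. r z m}"
      using y m(1) refl antisym trans by blast
    then have "below y < below m"
      unfolding below_def using assms(1) by (simp add: psubset_card_mono)
    with m(2)[OF y(1)] show False by simp
  qed
  with m(1) show ?thesis by blast
qed

inductive cover_chain :: "('a \<Rightarrow> 'a \<Rightarrow> bool) \<Rightarrow> 'a set \<Rightarrow> 'a \<Rightarrow> 'a \<Rightarrow> nat \<Rightarrow> bool"
  for le P where
  cover_chain_0: "cover_chain le P u u 0"
| cover_chain_Suc: "cover_chain le P u y n \<Longrightarrow> covers le P y x \<Longrightarrow> cover_chain le P u x (Suc n)"

lemma cover_chain_trans:
  "cover_chain le P y x m \<Longrightarrow> cover_chain le P u y n \<Longrightarrow> cover_chain le P u x (n + m)"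
  by (induction rule: cover_chain.induct) (auto intro: cover_chain.intros)

lemma cover_chain_0_eq: "cover_chain le P u x 0 \<Longrightarrow> x = u"
  by (cases rule: cover_chain.cases) auto

lemma cover_chain_of_list:
  assumes "cs \<noteq> []" "\<forall>i. Suc i < length cs \<longrightarrow> covers le P (cs ! i) (cs ! Suc i)"
  shows "cover_chain le P (hd cs) (last cs) (length cs - 1)"
  using assms
proof (induction cs rule: rev_induct)
  case Nil
  then show ?case by simp
next
  case (snoc x xs)
  show ?case
  proof (cases "xs = []")
    case True
    then show ?thesis by (simp add: cover_chain_0)
  next
    case False
    have "\<forall>i. Suc i < length xs \<longrightarrow> covers le P (xs ! i) (xs ! Suc i)"
    proof (intro allI impI)
      fix i assume i: "Suc i < length xs"
      then have "covers le P ((xs @ [x]) ! i) ((xs @ [x]) ! Suc i)"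
        using snoc.prems(2) by simp
      then show "covers le P (xs ! i) (xs ! Suc i)"
        using i by (simp add: nth_append)
    qed
    with snoc.IH False have chain: "cover_chain le P (hd xs) (last xs) (length xs - 1)"
      by blast
    have "Suc (length xs - 1) < length (xs @ [x])" using False by simp
    from snoc.prems(2)[rule_format, OF this]
    have "covers le P ((xs @ [x]) ! (length xs - 1)) ((xs @ [x]) ! Suc (length xs - 1))" .
    then have "covers le P (last xs) x"
      using False by (simp add: nth_append last_conv_nth)
    from cover_chain_Suc[OF chain this] show ?thesis
      using False by simp
  qed
qed

lemma atom_in: "b \<in> atoms le P \<Longrightarrow> b \<in> P"
  unfolding atoms_def by blast

lemma mem_joins_iff:
  "j \<in> joins le P T \<longleftrightarrow> j \<in> P \<and> (\<forall>t\<in>T. le t j) \<and> (\<forall>s\<in>P. (\<forall>t\<in>T. le t s) \<longrightarrow> le s j \<longrightarrow> s = j)"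
  unfolding joins_def minimal_elems_def upper_bounds_def lt_def by blast

lemma maximal_elems_iff: "m \<in> maximal_elems le P \<longleftrightarrow> m \<in> P \<and> (\<forall>y\<in>P. le m y \<longrightarrow> y = m)"
  unfolding maximal_elems_def lt_def by blast

locale ranked_poset =
  fixes le :: "'a \<Rightarrow> 'a \<Rightarrow> bool" and P :: "'a set"
  assumes poset: "is_poset le P"
begin

abbreviation bottom :: 'a where
  "bottom \<equiv> bot le P"

lemma finite_carrier: "finite P"
  using poset unfolding is_poset_def by blast

lemma refl_le: "x \<in> P \<Longrightarrow> le x x"
  using poset unfolding is_poset_def by blast

lemma antisym_le: "x \<in> P \<Longrightarrow> y \<in> P \<Longrightarrow> le x y \<Longrightarrow> le y x \<Longrightarrow> x = y"
  using poset unfolding is_poset_def by blast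

lemma trans_le: "x \<in> P \<Longrightarrow> y \<in> P \<Longrightarrow> z \<in> P \<Longrightarrow> le x y \<Longrightarrow> le y z \<Longrightarrow> le x z"
  using poset unfolding is_poset_def by blast

lemma ex_minimal:
  assumes "S \<subseteq> P" "S \<noteq> {}"
  shows "\<exists>m\<in>S. \<forall>y\<in>S. le y m \<longrightarrow> y = m"
proof (rule finite_ex_minimal_wrt[OF _ assms(2)])
  show "finite S" using assms(1) finite_carrier finite_subset by blast
qed (use assms(1) refl_le antisym_le trans_le in blast)+

lemma ex_maximal:
  assumes "S \<subseteq> P" "S \<noteq> {}"
  shows "\<exists>m\<in>S. \<forall>y\<in>S. le m y \<longrightarrow> y = m"
proof (rule finite_ex_minimal_wrt[OF _ assms(2), where r = "\<lambda>x y. le y x"])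
  show "finite S" using assms(1) finite_carrier finite_subset by blast
qed (use assms(1) refl_le antisym_le trans_le in blast)+

lemma ex_minimal_below:
  assumes "S \<subseteq> P" "x \<in> S"
  shows "\<exists>m\<in>S. le m x \<and> (\<forall>y\<in>S. le y m \<longrightarrow> y = m)"
proof -
  have "{y\<in>S. le y x} \<noteq> {}" using assms refl_le by blast
  from ex_minimal[OF _ this] assms obtain m where m: "m \<in> S" "le m x"
    "\<forall>y\<in>{y\<in>S. le y x}. le y m \<longrightarrow> y = m" by auto
  show ?thesis using m trans_le assms by (intro bexI[of _ m]) blast+
qed

lemma ex_maximal_above:
  assumes "S \<subseteq> P" "x \<in> S"
  shows "\<exists>m\<in>S. le x m \<and> (\<forall>y\<in>S. le m y \<longrightarrow> y = m)"
proof -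
  have "{y\<in>S. le x y} \<noteq> {}" using assms refl_le by blast
  from ex_maximal[OF _ this] assms obtain m where m: "m \<in> S" "le x m"
    "\<forall>y\<in>{y\<in>S. le x y}. le m y \<longrightarrow> y = m" by auto
  show ?thesis using m trans_le assms by (intro bexI[of _ m]) blast+
qed

lemma atom_in_P: "b \<in> atoms le P \<Longrightarrow> b \<in> P"
  by (rule atom_in)

lemma satchain_length_unique:
  "x \<in> P \<Longrightarrow> satchain le P cs x \<Longrightarrow> satchain le P ds x \<Longrightarrow> length cs = length ds"
  using poset unfolding is_poset_def by blast

lemma minimal_elems_eq: "minimal_elems le P = {bottom}"
proof -
  have ex1: "\<exists>!z. z \<in> minimal_elems le P"
    using poset unfolding is_poset_def by blast
  then show ?thesis
    unfolding bot_def using theI'[OF ex1] by blast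
qed

lemma bot_in: "bottom \<in> P"
  using minimal_elems_eq unfolding minimal_elems_def by blast

lemma bot_le: "x \<in> P \<Longrightarrow> le bottom x"
proof -
  assume x: "x \<in> P"
  obtain m where m: "m \<in> P" "le m x" "\<forall>y\<in>P. le y m \<longrightarrow> y = m"
    using ex_minimal_below[OF _ x] by blast
  then have "m \<in> minimal_elems le P"
    unfolding minimal_elems_def lt_def by blast
  with m(2) show ?thesis
    using minimal_elems_eq by simp
qed

lemma bot_unique: "x \<in> P \<Longrightarrow> le x bottom \<Longrightarrow> x = bottom"
  using antisym_le bot_in bot_le by blast

lemma cover_chain_le: "cover_chain le P u x n \<Longrightarrow> u \<in> P \<Longrightarrow> le u x \<and> x \<in> P"
  by (induction rule: cover_chain.induct) (auto simp: covers_def lt_def intro: refl_le trans_le)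

lemma ex_upper_cover:
  assumes "u \<in> P" "x \<in> P" "le u x" "u \<noteq> x"
  shows "\<exists>v. covers le P u v \<and> le v x"
proof -
  have "{z\<in>P. lt le u z \<and> le z x} \<noteq> {}" using assms refl_le unfolding lt_def by blast
  from ex_minimal[OF _ this] obtain m where m: "m \<in> P" "lt le u m" "le m x"
     "\<forall>y\<in>{z\<in>P. lt le u z \<and> le z x}. le y m \<longrightarrow> y = m" by blast
  have "covers le P u m" unfolding covers_def
  proof (intro conjI assms m notI)
    assume "\<exists>z\<in>P. lt le u z \<and> lt le z m"
    then obtain z where z: "z \<in> P" "lt le u z" "lt le z m" by blast
    have "le z x" using trans_le[OF z(1) m(1) assms(2)] z m unfolding lt_def by blast
    then show False using m(4) z unfolding lt_def by blast
  qed
  then show ?thesis using m by blast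
qed

lemma ex_lower_cover:
  assumes "u \<in> P" "x \<in> P" "le u x" "u \<noteq> x"
  shows "\<exists>v. covers le P v x \<and> le u v"
proof -
  have "{z\<in>P. le u z \<and> lt le z x} \<noteq> {}" using assms refl_le unfolding lt_def by blast
  from ex_maximal[OF _ this] obtain m where m: "m \<in> P" "lt le m x" "le u m"
     "\<forall>y\<in>{z\<in>P. le u z \<and> lt le z x}. le m y \<longrightarrow> y = m" by blast
  have "covers le P m x" unfolding covers_def
  proof (intro conjI assms m notI)
    assume "\<exists>z\<in>P. lt le m z \<and> lt le z x"
    then obtain z where z: "z \<in> P" "lt le m z" "lt le z x" by blast
    have "le u z" using trans_le[OF assms(1) m(1) z(1)] z m unfolding lt_def by blast
    then show False using m(4) z unfolding lt_def by blast
  qed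
  then show ?thesis using m by blast
qed

lemma ex_cover_chain:
  assumes "u \<in> P" "x \<in> P" "le u x"
  shows "\<exists>n. cover_chain le P u x n"
  using assms(2,3)
proof (induction "card {z\<in>P. le u z \<and> lt le z x}" arbitrary: x rule: less_induct)
  case less
  show ?case
  proof (cases "u = x")
    case True
    then show ?thesis using cover_chain_0 by metis
  next
    case False
    obtain v where v: "covers le P v x" "le u v"
      using ex_lower_cover[OF assms(1) less.prems False] by blast
    have vP: "v \<in> P" using v(1) unfolding covers_def by blast
    have "{z\<in>P. le u z \<and> lt le z v} \<subset> {z\<in>P. le u z \<and> lt le z x}"
      using v vP less.prems antisym_le trans_le unfolding covers_def lt_def by blast
    then have "card {z\<in>P. le u z \<and> lt le z v} < card {z\<in>P. le u z \<and> lt le z x}"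
      using finite_carrier by (simp add: psubset_card_mono)
    from less.hyps[OF this vP v(2)] obtain n where "cover_chain le P u v n" by blast
    from cover_chain_Suc[OF this v(1)] show ?thesis by blast
  qed
qed

lemma cover_chain_list:
  assumes "cover_chain le P u x n" "u \<in> P"
  shows "\<exists>cs. cs \<noteq> [] \<and> hd cs = u \<and> last cs = x \<and> set cs \<subseteq> P \<and>
     (\<forall>i. Suc i < length cs \<longrightarrow> covers le P (cs ! i) (cs ! Suc i)) \<and> length cs = Suc n"
  using assms
proof (induction rule: cover_chain.induct)
  case (cover_chain_0 u)
  then show ?case by (intro exI[of _ "[u]"]) auto
next
  case (cover_chain_Suc u y n x)
  then obtain cs where cs: "cs \<noteq> []" "hd cs = u" "last cs = y" "set cs \<subseteq> P"
     "\<forall>i. Suc i < length cs \<longrightarrow> covers le P (cs ! i) (cs ! Suc i)" "length cs = Suc n" by blast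
  have xP: "x \<in> P" using cover_chain_Suc(2) unfolding covers_def by blast
  show ?case
  proof (intro exI[of _ "cs @ [x]"] conjI allI impI)
    fix i assume i: "Suc i < length (cs @ [x])"
    show "covers le P ((cs @ [x]) ! i) ((cs @ [x]) ! Suc i)"
    proof (cases "Suc i < length cs")
      case True
      then show ?thesis using cs(5) i by (simp add: nth_append)
    next
      case False
      then have "i = length cs - 1" using i by simp
      moreover have "cs ! (length cs - 1) = y" using cs(1,3) by (simp add: last_conv_nth)
      ultimately show ?thesis using cover_chain_Suc(2) cs(1) False by (simp add: nth_append)
    qed
  qed (use cs xP in auto)
qed

lemma rk_cover_chain_bottom:
  assumes "cover_chain le P bottom x n"
  shows "rk le P x = n"
proof -
  obtain cs where cs: "satchain le P cs x" "length cs = Suc n"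
    using cover_chain_list[OF assms bot_in] unfolding satchain_def by blast
  have xP: "x \<in> P" using cover_chain_le[OF assms bot_in] by blast
  have "\<exists>m cs. satchain le P cs x \<and> length cs = Suc m" using cs by blast
  from someI_ex[OF this] obtain ds where ds: "satchain le P ds x" "length ds = Suc (rk le P x)"
    unfolding rk_def by blast
  have "length cs = length ds" using satchain_length_unique xP cs ds by blast
  then show ?thesis using cs ds by simp
qed

lemma cover_chain_bottom_rk:
  assumes "x \<in> P"
  shows "cover_chain le P bottom x (rk le P x)"
proof -
  obtain n where "cover_chain le P bottom x n"
    using ex_cover_chain[OF bot_in assms bot_le[OF assms]] by blast
  with rk_cover_chain_bottom[OF this] show ?thesis by simp
qed

lemma rk_cover_chain:
  assumes "cover_chain le P u x n" "u \<in> P"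
  shows "rk le P x = rk le P u + n"
  using rk_cover_chain_bottom cover_chain_trans[OF assms(1) cover_chain_bottom_rk[OF assms(2)]] .

lemma rk_less:
  assumes "u \<in> P" "x \<in> P" "le u x" "u \<noteq> x"
  shows "rk le P u < rk le P x"
proof -
  obtain n where n: "cover_chain le P u x n" using ex_cover_chain assms by blast
  with assms(4) have "n \<noteq> 0" using cover_chain_0_eq by (metis (full_types))
  then show ?thesis using rk_cover_chain[OF n assms(1)] by simp
qed

lemma rk_mono: "u \<in> P \<Longrightarrow> x \<in> P \<Longrightarrow> le u x \<Longrightarrow> rk le P u \<le> rk le P x"
  by (metis rk_less le_refl less_imp_le)

lemma eq_of_le_rk_eq: "u \<in> P \<Longrightarrow> x \<in> P \<Longrightarrow> le u x \<Longrightarrow> rk le P u = rk le P x \<Longrightarrow> u = x"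
  using rk_less by fastforce

lemma rk_covers: "covers le P u v \<Longrightarrow> rk le P v = Suc (rk le P u)"
  using rk_cover_chain[OF cover_chain_Suc[OF cover_chain_0]] unfolding covers_def by fastforce

lemma rk_bottom: "rk le P bottom = 0"
  using rk_cover_chain_bottom[OF cover_chain_0] .

lemma rk_eq_0D: "x \<in> P \<Longrightarrow> rk le P x = 0 \<Longrightarrow> x = bottom"
  using rk_less[OF bot_in _ bot_le] by fastforce

lemma le_atomD: "b \<in> atoms le P \<Longrightarrow> x \<in> P \<Longrightarrow> le x b \<Longrightarrow> x = bottom \<or> x = b"
  unfolding atoms_def using rk_less rk_eq_0D by (cases "x = b") fastforce+

lemma atom_neq_bottom: "b \<in> atoms le P \<Longrightarrow> b \<noteq> bottom"
  unfolding atoms_def using rk_bottom by auto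

lemma rk_le_rank: "x \<in> P \<Longrightarrow> rk le P x \<le> rank le P"
  unfolding rank_def using finite_carrier by simp

lemma rank_attained: "\<exists>x\<in>P. rk le P x = rank le P"
  unfolding rank_def using finite_carrier bot_in
  by (metis (mono_tags, lifting) Max_in empty_iff finite_imageI image_iff)

lemma rk_strict_mono_image:
  assumes "y0 \<in> P" "c \<in> P" "le y0 c"
    and f_in: "\<And>s. s \<in> P \<Longrightarrow> le y0 s \<Longrightarrow> le s c \<Longrightarrow> f s \<in> P"
    and f_strict_mono: "\<And>s t. s \<in> P \<Longrightarrow> t \<in> P \<Longrightarrow> le y0 s \<Longrightarrow> le s t \<Longrightarrow> le t c \<Longrightarrow> s \<noteq> t \<Longrightarrow>
      le (f s) (f t) \<and> f s \<noteq> f t"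
  shows "rk le P (f y0) + (rk le P c - rk le P y0) \<le> rk le P (f c)"
proof -
  have "rk le P (f y) + (rk le P c - rk le P y) \<le> rk le P (f c)"
    if "y \<in> P" "le y0 y" "le y c" for y
    using that
  proof (induction "rk le P c - rk le P y" arbitrary: y rule: less_induct)
    case less
    show ?case
    proof (cases "y = c")
      case False
      obtain v where v: "covers le P y v" "le v c"
        using ex_upper_cover[OF less.prems(1) assms(2) less.prems(3) False] by blast
      have vP: "v \<in> P" and yv: "le y v" "y \<noteq> v" using v(1) unfolding covers_def lt_def by auto
      have rv: "rk le P v = Suc (rk le P y)" using rk_covers[OF v(1)] .
      have rc: "rk le P v \<le> rk le P c" using rk_mono[OF vP assms(2) v(2)] .
      have y0v: "le y0 v" using trans_le[OF assms(1) less.prems(1) vP less.prems(2) yv(1)] .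
      have "rk le P (f v) + (rk le P c - rk le P v) \<le> rk le P (f c)"
        using less.hyps[of v] rv rc less.prems vP y0v v(2) by simp
      moreover have "rk le P (f y) < rk le P (f v)"
        using f_strict_mono[OF less.prems(1) vP less.prems(2) yv(1) v(2) yv(2)] rk_less
          f_in less.prems vP y0v v(2) by blast
      ultimately show ?thesis using rv rc by linarith
    qed simp
  qed
  from this[OF assms(1) refl_le[OF assms(1)] assms(3)] show ?thesis .
qed

lemma rk_maximal_elems_pure:
  assumes "pure le P" "c \<in> maximal_elems le P"
  shows "rk le P c = rank le P"
proof -
  obtain w where w: "w \<in> P" "rk le P w = rank le P" using rank_attained by blast
  obtain c' where c': "c' \<in> P" "le w c'" "\<forall>y\<in>P. le c' y \<longrightarrow> y = c'"
    using ex_maximal_above[OF subset_refl w(1)] by blast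
  then have "c' \<in> maximal_elems le P" unfolding maximal_elems_iff by blast
  with assms have "rk le P c = rk le P c'" unfolding pure_def by blast
  also have "\<dots> = rank le P"
    using rk_mono[OF w(1) c'(1,2)] rk_le_rank[OF c'(1)] w(2) by simp
  finally show ?thesis .
qed

end

section \<open>Order ideals, joins and lattices\<close>

context ranked_poset
begin

lemma minimal_elems_subset:
  assumes "S \<subseteq> P" "bottom \<in> S"
  shows "minimal_elems le S = {bottom}"
  using assms bot_le bot_unique unfolding minimal_elems_def lt_def by blast

lemma is_poset_subset:
  assumes "S \<subseteq> P" "bottom \<in> S"
    and "\<And>x cs ds. x \<in> S \<Longrightarrow> satchain le S cs x \<Longrightarrow> satchain le S ds x \<Longrightarrow> length cs = length ds"
  shows "is_poset le S"
  unfolding is_poset_def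
proof (intro conjI ballI allI impI)
  show "finite S" using finite_carrier assms(1) finite_subset by blast
  show "\<exists>!z. z \<in> minimal_elems le S" using minimal_elems_subset[OF assms(1,2)] by simp
  show "length cs = length ds" if "x \<in> S" "satchain le S cs x \<and> satchain le S ds x" for x cs ds
    using assms(3) that by blast
qed (use assms(1) refl_le antisym_le trans_le in blast)+

lemma bottom_in_order_ideal:
  assumes "order_ideal le P D" "D \<noteq> {}"
  shows "bottom \<in> D"
proof -
  obtain x where "x \<in> D" using assms(2) by blast
  with assms(1) show ?thesis
    unfolding order_ideal_def using bot_in bot_le by blast
qed

lemma bot_order_ideal:
  assumes "order_ideal le P D" "D \<noteq> {}"
  shows "bot le D = bottom"
proof -
  have "D \<subseteq> P" using assms(1) unfolding order_ideal_def by blast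
  from minimal_elems_subset[OF this bottom_in_order_ideal[OF assms]]
  show ?thesis unfolding bot_def by simp
qed

lemma covers_order_ideal_iff:
  assumes "order_ideal le P D" "v \<in> D"
  shows "covers le D u v \<longleftrightarrow> covers le P u v"
proof
  assume "covers le D u v"
  then show "covers le P u v"
    using assms unfolding order_ideal_def covers_def lt_def by blast
next
  assume uv: "covers le P u v"
  then have "u \<in> D"
    using assms unfolding order_ideal_def covers_def lt_def by blast
  with uv show "covers le D u v"
    using assms unfolding order_ideal_def covers_def by blast
qed

lemma cover_chain_order_ideal:
  assumes "cover_chain le P u x n" "x \<in> D" "order_ideal le P D"
  shows "cover_chain le D u x n"
  using assms(1,2)
proof (induction rule: cover_chain.induct)
  case (cover_chain_0 u)
  show ?case by (rule cover_chain.cover_chain_0)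
next
  case (cover_chain_Suc u y n x)
  have "y \<in> D"
    using cover_chain_Suc.hyps(2) cover_chain_Suc.prems assms(3)
    unfolding order_ideal_def covers_def lt_def by blast
  moreover have "covers le D y x"
    using covers_order_ideal_iff[OF assms(3) cover_chain_Suc.prems] cover_chain_Suc.hyps(2) by blast
  ultimately show ?case
    using cover_chain.cover_chain_Suc[OF cover_chain_Suc.IH] by blast
qed

lemma satchain_order_ideal:
  assumes D: "order_ideal le P D" "D \<noteq> {}" and "satchain le D cs x"
  shows "satchain le P cs x"
proof -
  have "covers le P (cs ! i) (cs ! Suc i)" if i: "Suc i < length cs" for i
  proof -
    have "cs ! Suc i \<in> D"
      using assms(3) i unfolding satchain_def by (meson nth_mem subsetD)
    then show ?thesis
      using covers_order_ideal_iff[OF D(1)] assms(3) i unfolding satchain_def by blast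
  qed
  moreover have "set cs \<subseteq> P"
    using assms(1,3) unfolding satchain_def order_ideal_def by blast
  ultimately show ?thesis
    using assms(3) bot_order_ideal[OF D] unfolding satchain_def by simp
qed

lemma ranked_poset_order_ideal:
  assumes D: "order_ideal le P D" "D \<noteq> {}"
  shows "ranked_poset le D"
proof
  have DP: "D \<subseteq> P" using D(1) unfolding order_ideal_def by blast
  show "is_poset le D"
  proof (rule is_poset_subset[OF DP bottom_in_order_ideal[OF D]])
    fix x cs ds assume "x \<in> D" "satchain le D cs x" "satchain le D ds x"
    then show "length cs = length ds"
      using satchain_order_ideal[OF D] satchain_length_unique DP by blast
  qed
qed

lemma rk_order_ideal:
  assumes D: "order_ideal le P D" "D \<noteq> {}" and x: "x \<in> D"
  shows "rk le D x = rk le P x"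
proof -
  interpret D: ranked_poset le D
    using ranked_poset_order_ideal[OF D] .
  have "x \<in> P" using D(1) x unfolding order_ideal_def by blast
  from cover_chain_order_ideal[OF cover_chain_bottom_rk[OF this] x D(1)]
  show ?thesis
    using D.rk_cover_chain_bottom bot_order_ideal[OF D] by simp
qed

lemma atoms_order_ideal:
  assumes "order_ideal le P D" "D \<noteq> {}"
  shows "atoms le D = atoms le P \<inter> D"
proof -
  have "D \<subseteq> P" using assms(1) unfolding order_ideal_def by blast
  moreover have "rk le D x = rk le P x" if "x \<in> D" for x
    using rk_order_ideal[OF assms that] .
  ultimately show ?thesis unfolding atoms_def by auto
qed

lemma order_ideal_down: "x \<in> P \<Longrightarrow> order_ideal le P (down le P x)"
  unfolding order_ideal_def down_def using trans_le by blast

lemma mem_down_self: "x \<in> P \<Longrightarrow> x \<in> down le P x"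
  unfolding down_def using refl_le by blast

lemma down_subset: "down le P x \<subseteq> P"
  unfolding down_def by blast

lemma atoms_down:
  assumes "x \<in> P"
  shows "atoms le (down le P x) = {b\<in>atoms le P. le b x}"
proof -
  have "down le P x \<noteq> {}" using mem_down_self[OF assms] by blast
  from atoms_order_ideal[OF order_ideal_down[OF assms] this]
  show ?thesis unfolding down_def atoms_def by auto
qed

lemma ranked_poset_down: "x \<in> P \<Longrightarrow> ranked_poset le (down le P x)"
  using ranked_poset_order_ideal[OF order_ideal_down] mem_down_self by blast

lemma covers_down_iff:
  "x \<in> P \<Longrightarrow> v \<in> down le P x \<Longrightarrow> covers le (down le P x) u v \<longleftrightarrow> covers le P u v"
  using covers_order_ideal_iff[OF order_ideal_down] .

lemma joins_subset: "joins le P T \<subseteq> P"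
  unfolding joins_def minimal_elems_def upper_bounds_def by blast

lemma ex_joins_below_upper_bound:
  assumes "u \<in> P" "\<forall>t\<in>T. le t u"
  shows "\<exists>j\<in>joins le P T. le j u"
proof -
  have "upper_bounds le P T \<subseteq> P" "u \<in> upper_bounds le P T"
    using assms unfolding upper_bounds_def by auto
  from ex_minimal_below[OF this] obtain m where
    "m \<in> upper_bounds le P T" "le m u" "\<forall>y\<in>upper_bounds le P T. le y m \<longrightarrow> y = m"
    by blast
  then show ?thesis
    unfolding joins_def minimal_elems_def lt_def by blast
qed

lemma joins_empty: "joins le P {} = {bottom}"
proof -
  have "upper_bounds le P {} = P" unfolding upper_bounds_def by blast
  then show ?thesis
    unfolding joins_def using minimal_elems_eq by simp
qed

lemma joins_singleton_le:
  assumes "joins le P T = {j}" "u \<in> P" "\<forall>t\<in>T. le t u"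
  shows "le j u"
proof -
  obtain j' where "j' \<in> joins le P T" "le j' u"
    using ex_joins_below_upper_bound[OF assms(2,3)] by blast
  with assms(1) show ?thesis by simp
qed

lemma joins_self: "x \<in> P \<Longrightarrow> x \<in> joins le P {x}"
  unfolding mem_joins_iff using antisym_le refl_le by blast

lemma subposet_gen_subset: "subposet_gen le P B \<subseteq> P"
  unfolding subposet_gen_def using bot_in joins_subset by blast

lemma join_eqI:
  assumes "is_lub le L {u, v} s" "L \<subseteq> P"
  shows "join le L u v = s"
  unfolding join_def
proof (rule the_equality[where P = "\<lambda>s. is_lub le L {u, v} s", OF assms(1)])
  fix s' assume "is_lub le L {u, v} s'"
  with assms(1) have "s' \<in> L" "s \<in> L" "le s' s" "le s s'"
    unfolding is_lub_def by blast+
  with assms(2) show "s' = s" using antisym_le by blast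
qed

lemma meet_eqI:
  assumes "is_glb le L {u, v} s" "L \<subseteq> P"
  shows "meet le L u v = s"
  unfolding meet_def
proof (rule the_equality[where P = "\<lambda>s. is_glb le L {u, v} s", OF assms(1)])
  fix s' assume "is_glb le L {u, v} s'"
  with assms(1) have "s' \<in> L" "s \<in> L" "le s' s" "le s s'"
    unfolding is_glb_def by blast+
  with assms(2) show "s' = s" using antisym_le by blast
qed

lemma mem_subposet_gen_iff: "u \<in> subposet_gen le P B \<longleftrightarrow> (\<exists>T\<subseteq>B. u \<in> joins le P T)"
proof
  assume "u \<in> subposet_gen le P B"
  then have "u = bottom \<or> (\<exists>T. T \<subseteq> B \<and> T \<noteq> {} \<and> u \<in> joins le P T)"
    unfolding subposet_gen_def by blast
  moreover have "{} \<subseteq> B" "bottom \<in> joins le P {}" using joins_empty by auto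
  ultimately show "\<exists>T\<subseteq>B. u \<in> joins le P T" by blast
next
  assume "\<exists>T\<subseteq>B. u \<in> joins le P T"
  then obtain T where T: "T \<subseteq> B" "u \<in> joins le P T" by blast
  then show "u \<in> subposet_gen le P B"
    using joins_empty unfolding subposet_gen_def by (cases "T = {}") auto
qed

lemma ex_glb_of_ex_lub:
  assumes lub: "\<And>u v. u \<in> P \<Longrightarrow> v \<in> P \<Longrightarrow> \<exists>s. is_lub le P {u, v} s"
    and u: "u \<in> P" and v: "v \<in> P"
  shows "\<exists>g. is_glb le P {u, v} g"
proof -
  let ?C = "{z\<in>P. le z u \<and> le z v}"
  have "bottom \<in> ?C" using bot_in bot_le u v by blast
  then obtain g where g: "g \<in> ?C" "\<forall>y\<in>?C. le g y \<longrightarrow> y = g"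
    using ex_maximal[of ?C] by blast
  have "is_glb le P {u, v} g" unfolding is_glb_def
  proof (intro conjI ballI impI)
    show "g \<in> P" "\<And>t. t \<in> {u, v} \<Longrightarrow> le g t" using g by blast+
    fix c assume c: "c \<in> P" "\<forall>t\<in>{u, v}. le c t"
    obtain s where s: "is_lub le P {c, g} s" using lub[OF c(1)] g by blast
    then have "s \<in> ?C" using c g u v unfolding is_lub_def by auto
    moreover have "le g s" using s unfolding is_lub_def by blast
    ultimately have "s = g" using g by blast
    then show "le c g" using s unfolding is_lub_def by blast
  qed
  then show ?thesis by blast
qed

end

locale locally_geometric_poset = ranked_poset +
  assumes geometric_down: "x \<in> P \<Longrightarrow> geometric_lattice le (down le P x)"
begin

lemma is_lub_join_down:
  assumes "x \<in> P" "u \<in> down le P x" "v \<in> down le P x"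
  shows "is_lub le (down le P x) {u, v} (join le (down le P x) u v)"
proof -
  obtain s where "is_lub le (down le P x) {u, v} s"
    using geometric_down[OF assms(1)] assms
    unfolding geometric_lattice_def is_lattice_def by blast
  with join_eqI[OF this down_subset] show ?thesis by simp
qed

lemma is_glb_meet_down:
  assumes "x \<in> P" "u \<in> down le P x" "v \<in> down le P x"
  shows "is_glb le (down le P x) {u, v} (meet le (down le P x) u v)"
proof -
  obtain s where "is_glb le (down le P x) {u, v} s"
    using geometric_down[OF assms(1)] assms
    unfolding geometric_lattice_def is_lattice_def by blast
  with meet_eqI[OF this down_subset] show ?thesis by simp
qed

lemma join_in_joins:
  assumes "x \<in> P" "le u x" "le v x" "u \<in> P" "v \<in> P"
  shows "join le (down le P x) u v \<in> joins le P {u, v}"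
proof -
  have uv: "u \<in> down le P x" "v \<in> down le P x" using assms unfolding down_def by auto
  note L = is_lub_join_down[OF assms(1) uv]
  show ?thesis unfolding mem_joins_iff
  proof (intro conjI ballI impI)
    show "join le (down le P x) u v \<in> P" using L unfolding is_lub_def down_def by blast
    show "\<And>t. t \<in> {u, v} \<Longrightarrow> le t (join le (down le P x) u v)" using L unfolding is_lub_def by blast
    fix s assume s: "s \<in> P" "\<forall>t\<in>{u, v}. le t s" "le s (join le (down le P x) u v)"
    have jx: "join le (down le P x) u v \<in> P" "le (join le (down le P x) u v) x"
      using L unfolding is_lub_def down_def by blast+
    have "s \<in> down le P x"
      using trans_le[OF s(1) jx(1) assms(1) s(3) jx(2)] s(1) unfolding down_def by blast
    then have "le (join le (down le P x) u v) s" using L s unfolding is_lub_def by blast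
    then show "s = join le (down le P x) u v" using antisym_le s jx(1) by blast
  qed
qed

lemma join_down_eq_joins:
  assumes "j \<in> joins le P {u, v}" "x \<in> P" "le j x" "u \<in> P" "v \<in> P"
  shows "join le (down le P x) u v = j"
proof -
  have j: "j \<in> P" "le u j" "le v j" using assms(1) unfolding mem_joins_iff by auto
  then have uv: "u \<in> down le P x" "v \<in> down le P x"
    using assms trans_le unfolding down_def by blast+
  note L = is_lub_join_down[OF assms(2) uv]
  have "le (join le (down le P x) u v) j"
    using L j assms(3) unfolding is_lub_def down_def by blast
  moreover have "join le (down le P x) u v \<in> P" "\<forall>t\<in>{u, v}. le t (join le (down le P x) u v)"
    using L unfolding is_lub_def down_def by blast+
  ultimately show ?thesis using assms(1) unfolding mem_joins_iff by blast
qed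

end

section \<open>Locally geometric posets\<close>

context locally_geometric_poset
begin

lemma eq_of_same_atoms_below:
  assumes "x \<in> P" "u \<in> P" "le u x" "\<forall>b\<in>atoms le P. le b x \<longrightarrow> le b u"
  shows "u = x"
proof (rule ccontr)
  assume ne: "u \<noteq> x"
  let ?D = "down le P x"
  interpret D: ranked_poset le ?D using ranked_poset_down[OF assms(1)] .
  have uD: "u \<in> ?D" and xD: "x \<in> ?D"
    using assms mem_down_self unfolding down_def by auto
  obtain v where v: "covers le ?D u v" "le v x"
    using D.ex_upper_cover[OF uD xD assms(3) ne] by blast
  have vD: "v \<in> ?D" using v(1) unfolding covers_def by blast
  have "\<exists>a\<in>atoms le ?D. \<not> le a u \<and> v = join le ?D u a"
    using geometric_down[OF assms(1)] uD vD v(1) unfolding geometric_lattice_def by blast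
  then obtain a where a: "a \<in> atoms le ?D" "\<not> le a u" by blast
  then have "a \<in> atoms le P" "le a x" using atoms_down[OF assms(1)] by auto
  with a(2) show False using assms(4) by blast
qed

lemma le_of_atoms_le:
  assumes "t \<in> P" "s \<in> P" "z \<in> P" "le t z" "le s z" "\<forall>b\<in>atoms le P. le b t \<longrightarrow> le b s"
  shows "le t s"
proof -
  let ?D = "down le P z"
  have tD: "t \<in> ?D" and sD: "s \<in> ?D" using assms(1,2,4,5) unfolding down_def by auto
  note M = is_glb_meet_down[OF assms(3) tD sD]
  define m where "m = meet le ?D t s"
  have mD: "m \<in> ?D" and mt: "le m t" and ms: "le m s"
    using M unfolding m_def is_glb_def by auto
  have mP: "m \<in> P" using mD down_subset by blast
  have "le b m" if b: "b \<in> atoms le P" "le b t" for b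
  proof -
    have bP: "b \<in> P" using atom_in_P[OF b(1)] .
    then have "b \<in> ?D"
      using trans_le[OF bP assms(1,3) b(2) assms(4)] unfolding down_def by blast
    moreover have "le b s" using assms(6) b by blast
    ultimately show ?thesis using M b(2) unfolding m_def is_glb_def by blast
  qed
  then have "m = t" using eq_of_same_atoms_below[OF assms(1) mP mt] by blast
  with ms show ?thesis by simp
qed

lemma joins_atoms_below:
  assumes "T \<subseteq> P" "j \<in> joins le P T"
  shows "j \<in> joins le P {b\<in>atoms le P. \<exists>t\<in>T. le b t}"
proof -
  have j: "j \<in> P" "\<forall>t\<in>T. le t j" "\<forall>s\<in>P. (\<forall>t\<in>T. le t s) \<longrightarrow> le s j \<longrightarrow> s = j"
    using assms(2) unfolding mem_joins_iff by auto
  show ?thesis unfolding mem_joins_iff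
  proof (intro conjI ballI impI)
    show "j \<in> P" by (rule j(1))
    fix b assume "b \<in> {b \<in> atoms le P. \<exists>t\<in>T. le b t}"
    then obtain t where t: "b \<in> atoms le P" "t \<in> T" "le b t" by blast
    have "t \<in> P" "le t j" using t(2) assms(1) j(2) by auto
    then show "le b j" using trans_le[OF atom_in_P[OF t(1)] _ j(1) t(3)] by blast
  next
    fix s assume s: "s \<in> P" "\<forall>t\<in>{b \<in> atoms le P. \<exists>t\<in>T. le b t}. le t s" "le s j"
    have "le t s" if t: "t \<in> T" for t
    proof (rule le_of_atoms_le[OF _ s(1) j(1) _ s(3)])
      show "t \<in> P" "le t j" using t assms(1) j(2) by auto
      show "\<forall>b\<in>atoms le P. le b t \<longrightarrow> le b s" using s(2) t by blast
    qed
    then show "s = j" using j(3) s(1,3) by blast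
  qed
qed

lemma mem_joins_atoms_below: "x \<in> P \<Longrightarrow> x \<in> joins le P {b\<in>atoms le P. le b x}"
  using joins_atoms_below[of "{x}" x] joins_self by auto

lemma covers_joins_atom:
  assumes b: "b \<in> atoms le P" and w: "w \<in> P" and nb: "\<not> le b w" and j: "j \<in> joins le P {b, w}"
  shows "covers le P w j"
proof -
  have jP: "j \<in> P" and bj: "le b j" and wj: "le w j" using j unfolding mem_joins_iff by auto
  have bP: "b \<in> P" using atom_in_P[OF b] .
  let ?D = "down le P j"
  have j': "j \<in> joins le P {w, b}" using j by (simp add: insert_commute)
  have "join le ?D w b = j" using join_down_eq_joins[OF j' jP refl_le[OF jP] w bP] .
  moreover have "w \<in> ?D" "j \<in> ?D" using w wj jP mem_down_self unfolding down_def by auto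
  moreover have "b \<in> atoms le ?D" using b bj atoms_down[OF jP] by auto
  ultimately have "covers le ?D w j"
    using geometric_down[OF jP] nb unfolding geometric_lattice_def by metis
  then show ?thesis using covers_down_iff[OF jP] mem_down_self[OF jP] by blast
qed

lemma joins_le_upper_bound:
  assumes j: "j \<in> joins le P T" and T: "T \<subseteq> P" and s: "s \<in> P" "\<forall>t\<in>T. le t s"
    and z: "z \<in> P" "le j z" "le s z"
  shows "le j s"
proof -
  have jP: "j \<in> P" and jT: "\<forall>t\<in>T. le t j" and jmin: "\<forall>s\<in>P. (\<forall>t\<in>T. le t s) \<longrightarrow> le s j \<longrightarrow> s = j"
    using j unfolding mem_joins_iff by auto
  let ?D = "down le P z"
  have jD: "j \<in> ?D" and sD: "s \<in> ?D" using jP s z unfolding down_def by auto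
  note G = is_glb_meet_down[OF z(1) jD sD]
  define m where "m = meet le ?D j s"
  have mD: "m \<in> ?D" and mj: "le m j" and ms: "le m s"
    using G unfolding m_def is_glb_def by auto
  have mP: "m \<in> P" using mD down_subset by blast
  have "le t m" if t: "t \<in> T" for t
  proof -
    have tP: "t \<in> P" using t T by blast
    then have "t \<in> ?D"
      using trans_le[OF tP jP z(1) _ z(2)] jT t unfolding down_def by blast
    then show ?thesis using G jT s(2) t unfolding m_def is_glb_def by blast
  qed
  then have "m = j" using jmin mP mj by blast
  with ms show ?thesis by simp
qed

lemma join_down_mem_joins_Un:
  assumes x: "x \<in> P" and u: "u \<in> joins le P Tu" "le u x" and v: "v \<in> joins le P Tv" "le v x"
    and T: "Tu \<subseteq> P" "Tv \<subseteq> P"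
  shows "join le (down le P x) u v \<in> joins le P (Tu \<union> Tv)"
proof -
  define s where "s = join le (down le P x) u v"
  have uP: "u \<in> P" and vP: "v \<in> P" using u(1) v(1) unfolding mem_joins_iff by auto
  have "u \<in> down le P x" "v \<in> down le P x" using uP vP u(2) v(2) unfolding down_def by auto
  from is_lub_join_down[OF x this] have S: "is_lub le (down le P x) {u, v} s"
    unfolding s_def .
  then have sP: "s \<in> P" and sx: "le s x" and us: "le u s" and vs: "le v s"
    unfolding is_lub_def down_def by auto
  show ?thesis unfolding s_def[symmetric] mem_joins_iff
  proof (intro conjI ballI impI sP)
    fix t assume "t \<in> Tu \<union> Tv"
    then show "le t s"
      using trans_le[OF _ uP sP _ us] trans_le[OF _ vP sP _ vs] u(1) v(1) T
      unfolding mem_joins_iff by blast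
  next
    fix s' assume s': "s' \<in> P" "\<forall>t\<in>Tu \<union> Tv. le t s'" "le s' s"
    have "le u s'" using joins_le_upper_bound[OF u(1) T(1) s'(1) _ sP us s'(3)] s'(2) by blast
    moreover have "le v s'" using joins_le_upper_bound[OF v(1) T(2) s'(1) _ sP vs s'(3)] s'(2)
      by blast
    moreover have "s' \<in> down le P x" using trans_le[OF s'(1) sP x s'(3) sx] s'(1) unfolding down_def
      by blast
    ultimately have "le s s'" using S unfolding is_lub_def by blast
    then show "s' = s" using antisym_le s'(1) sP s'(3) by blast
  qed
qed

lemma mem_subposet_gen_of_joins:
  assumes "T \<subseteq> P" "j \<in> joins le P T" "{b\<in>atoms le P. \<exists>t\<in>T. le b t} \<subseteq> B"
  shows "j \<in> subposet_gen le P B"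
  unfolding mem_subposet_gen_iff using joins_atoms_below[OF assms(1,2)] assms(3) by blast

lemma mem_subposet_gen_of_atoms_below:
  "x \<in> P \<Longrightarrow> {b\<in>atoms le P. le b x} \<subseteq> B \<Longrightarrow> x \<in> subposet_gen le P B"
  using mem_subposet_gen_of_joins[of "{x}" x B] joins_self by simp

lemma subposet_gen_atoms: "subposet_gen le P (atoms le P) = P"
proof (rule subset_antisym[OF subposet_gen_subset])
  show "P \<subseteq> subposet_gen le P (atoms le P)"
    by (intro subsetI mem_subposet_gen_of_atoms_below) auto
qed

end

section \<open>The Moebius function\<close>

text \<open>\<open>is_mobius\<close> only characterises the Moebius function; its existence comes from the
  recursion \<open>mobius_upto\<close>, which is exact once the step bound reaches the rank of the second
  argument.\<close>

fun mobius_upto :: "('a \<Rightarrow> 'a \<Rightarrow> bool) \<Rightarrow> 'a set \<Rightarrow> nat \<Rightarrow> 'a \<Rightarrow> 'a \<Rightarrow> int" where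
  "mobius_upto le P 0 x y = (if x \<in> P \<and> y \<in> P \<and> x = y then 1 else 0)"
| "mobius_upto le P (Suc n) x y = (if x \<in> P \<and> y \<in> P then (if x = y then 1 else if lt le x y then
      - (\<Sum>z\<in>{z\<in>P. le x z \<and> lt le z y}. mobius_upto le P n x z) else 0) else 0)"

context ranked_poset
begin

lemma mobius_upto_outside: "x \<notin> P \<or> y \<notin> P \<Longrightarrow> mobius_upto le P n x y = 0"
  by (cases n) auto

lemma rk_less_of_lt: "x \<in> P \<Longrightarrow> y \<in> P \<Longrightarrow> lt le x y \<Longrightarrow> rk le P x < rk le P y"
  using rk_less unfolding lt_def by blast

lemma mobius_upto_stable:
  assumes "y \<in> P" "rk le P y \<le> n"
  shows "mobius_upto le P n x y = mobius_upto le P (rk le P y) x y"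
  using assms
proof (induction "rk le P y" arbitrary: y n rule: less_induct)
  case less
  show ?case
  proof (cases "x \<in> P \<and> x \<noteq> y \<and> lt le x y")
    case False
    then show ?thesis using less.prems by (cases n; cases "rk le P y") (auto simp: lt_def)
  next
    case True
    then have "rk le P x < rk le P y" using rk_less_of_lt less.prems by blast
    then obtain k where k: "rk le P y = Suc k" by (cases "rk le P y") auto
    then obtain n' where n': "n = Suc n'" "k \<le> n'" using less.prems by (cases n) auto
    have "mobius_upto le P n' x z = mobius_upto le P k x z" if z: "z \<in> {z\<in>P. le x z \<and> lt le z y}" for z
    proof -
      have zl: "rk le P z < rk le P y" and zP: "z \<in> P"
        using rk_less_of_lt z less.prems by auto
      with k n' have "rk le P z \<le> n'" "rk le P z \<le> k" by auto
      with less.hyps[OF zl zP] show ?thesis by metis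
    qed
    then have "(\<Sum>z\<in>{z\<in>P. le x z \<and> lt le z y}. mobius_upto le P n' x z)
        = (\<Sum>z\<in>{z\<in>P. le x z \<and> lt le z y}. mobius_upto le P k x z)"
      by (rule sum.cong[OF refl])
    then show ?thesis using k n' True less.prems by simp
  qed
qed

lemma ex_is_mobius: "\<exists>m. is_mobius le P m"
proof
  define m where "m x y = mobius_upto le P (rk le P y) x y" for x y
  show "is_mobius le P m"
    unfolding is_mobius_def
  proof (intro conjI allI impI ballI)
    fix x y assume "x \<notin> P \<or> y \<notin> P"
    then show "m x y = 0" unfolding m_def using mobius_upto_outside by blast
  next
    fix x y assume x: "x \<in> P" and y: "y \<in> P"
    show "m x y = (if x = y then 1 else if lt le x y then - (\<Sum>z\<in>{z\<in>P. le x z \<and> lt le z y}. m x z) else 0)"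
    proof (cases "x \<noteq> y \<and> lt le x y")
      case False
      then show ?thesis using x y unfolding m_def by (cases "rk le P y") (auto simp: lt_def)
    next
      case True
      then have "rk le P x < rk le P y" using rk_less_of_lt x y by blast
      then obtain k where k: "rk le P y = Suc k" by (cases "rk le P y") auto
      have "mobius_upto le P k x z = m x z" if z: "z \<in> {z\<in>P. le x z \<and> lt le z y}" for z
        unfolding m_def using mobius_upto_stable[of z k x] z rk_less_of_lt[of z y] y k by simp
      then have "(\<Sum>z\<in>{z\<in>P. le x z \<and> lt le z y}. mobius_upto le P k x z)
          = (\<Sum>z\<in>{z\<in>P. le x z \<and> lt le z y}. m x z)"
        by (rule sum.cong[OF refl])
      then show ?thesis using k True x y unfolding m_def by simp
    qed
  qed
qed

lemma is_mobius_unique: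
  assumes m1: "is_mobius le P m1" and m2: "is_mobius le P m2"
  shows "m1 = m2"
proof -
  have "m1 x y = m2 x y" if y: "y \<in> P" for x y
    using y
  proof (induction "rk le P y" arbitrary: y rule: less_induct)
    case less
    show ?case
    proof (cases "x \<in> P")
      case False
      then show ?thesis using m1 m2 unfolding is_mobius_def by metis
    next
      case True
      have "m1 x z = m2 x z" if "z \<in> {z\<in>P. le x z \<and> lt le z y}" for z
        using less.hyps[of z] rk_less_of_lt[of z y] that less.prems by blast
      then have "(\<Sum>z\<in>{z\<in>P. le x z \<and> lt le z y}. m1 x z) = (\<Sum>z\<in>{z\<in>P. le x z \<and> lt le z y}. m2 x z)"
        by (rule sum.cong[OF refl])
      with m1 m2 True less.prems show ?thesis unfolding is_mobius_def by simp
    qed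
  qed
  moreover have "m1 x y = m2 x y" if y: "y \<notin> P" for x y
    using m1 m2 y unfolding is_mobius_def by metis
  ultimately show ?thesis by (intro ext) blast
qed

lemma is_mobius_mobius: "is_mobius le P (mobius le P)"
  unfolding mobius_def using ex_is_mobius is_mobius_unique by (metis theI')

lemma mobius_eqI: "is_mobius le P m \<Longrightarrow> mobius le P = m"
  using is_mobius_unique[OF is_mobius_mobius] .

lemma mobius_rec:
  "x \<in> P \<Longrightarrow> y \<in> P \<Longrightarrow> mobius le P x y = (if x = y then 1 else if lt le x y
     then - (\<Sum>z\<in>{z\<in>P. le x z \<and> lt le z y}. mobius le P x z) else 0)"
  using is_mobius_mobius unfolding is_mobius_def by blast

lemma mobius_bottom: "mobius le P bottom bottom = 1"
  using mobius_rec[OF bot_in bot_in] by simp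

lemma mobius_bottom_rec:
  assumes "y \<in> P" "y \<noteq> bottom"
  shows "mobius le P bottom y = - (\<Sum>z\<in>{z\<in>P. lt le z y}. mobius le P bottom z)"
proof -
  have "lt le bottom y" using assms bot_le unfolding lt_def by blast
  moreover have "{z\<in>P. le bottom z \<and> lt le z y} = {z\<in>P. lt le z y}" using bot_le by blast
  ultimately show ?thesis using mobius_rec[OF bot_in assms(1)] assms(2) by simp
qed

lemma sum_mobius_bottom:
  assumes "y \<in> P"
  shows "(\<Sum>z\<in>{z\<in>P. le z y}. mobius le P bottom z) = (if y = bottom then 1 else 0)"
proof -
  have "{z\<in>P. le z y} = insert y {z\<in>P. lt le z y}" "y \<notin> {z\<in>P. lt le z y}"
    using assms refl_le unfolding lt_def by blast+
  then have sum_eq: "(\<Sum>z\<in>{z\<in>P. le z y}. mobius le P bottom z)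
      = mobius le P bottom y + (\<Sum>z\<in>{z\<in>P. lt le z y}. mobius le P bottom z)"
    using finite_carrier by simp
  show ?thesis
  proof (cases "y = bottom")
    case True
    then have "{z\<in>P. lt le z y} = {}" using bot_unique unfolding lt_def by blast
    with True show ?thesis using sum_eq mobius_bottom by (simp only: sum.empty) simp
  next
    case False
    then show ?thesis using sum_eq mobius_bottom_rec[OF assms] by simp
  qed
qed

lemma sum_mobius_bottom_lt:
  assumes "y \<in> P"
  shows "(\<Sum>z\<in>{z\<in>P. lt le z y}. mobius le P bottom z) = (if y = bottom then 1 else 0) - mobius le P bottom y"
proof -
  have "{z\<in>P. le z y} = insert y {z\<in>P. lt le z y}" "y \<notin> {z\<in>P. lt le z y}"
    using assms refl_le unfolding lt_def by blast+
  then have "(\<Sum>z\<in>{z\<in>P. le z y}. mobius le P bottom z)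
      = mobius le P bottom y + (\<Sum>z\<in>{z\<in>P. lt le z y}. mobius le P bottom z)"
    using finite_carrier by simp
  with sum_mobius_bottom[OF assms] show ?thesis by simp
qed

lemma mobius_order_ideal:
  assumes D: "order_ideal le P D" "D \<noteq> {}" and xy: "x \<in> D" "y \<in> D"
  shows "mobius le D x y = mobius le P x y"
proof -
  interpret D: ranked_poset le D using ranked_poset_order_ideal[OF D] .
  have DP: "D \<subseteq> P" using D(1) unfolding order_ideal_def by blast
  define m where "m x y = (if x \<in> D \<and> y \<in> D then mobius le P x y else 0)" for x y
  have "is_mobius le D m"
    unfolding is_mobius_def
  proof (intro conjI allI impI ballI)
    fix x y assume "x \<notin> D \<or> y \<notin> D"
    then show "m x y = 0" unfolding m_def by auto
  next
    fix x y assume x: "x \<in> D" and y: "y \<in> D"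
    have S: "{z\<in>D. le x z \<and> lt le z y} = {z\<in>P. le x z \<and> lt le z y}"
      using D(1) y unfolding order_ideal_def lt_def by blast
    have "(\<Sum>z\<in>{z\<in>D. le x z \<and> lt le z y}. m x z) = (\<Sum>z\<in>{z\<in>P. le x z \<and> lt le z y}. mobius le P x z)"
      unfolding S by (rule sum.cong[OF refl]) (use S x m_def in auto)
    moreover have "x \<in> P" "y \<in> P" using x y DP by auto
    ultimately show "m x y = (if x = y then 1 else if lt le x y then - (\<Sum>z\<in>{z\<in>D. le x z \<and> lt le z y}. m x z) else 0)"
      using mobius_rec[of x y] x y unfolding m_def by (simp only: if_True simp_thms)
  qed
  then show ?thesis using D.mobius_eqI xy unfolding m_def by simp
qed

end

section \<open>Order isomorphisms\<close>


locale order_iso =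
  fixes le :: "'a \<Rightarrow> 'a \<Rightarrow> bool" and f :: "'a \<Rightarrow> 'a" and A B :: "'a set"
  assumes bij: "bij_betw f A B" and le_image_iff: "\<And>x y. x \<in> A \<Longrightarrow> y \<in> A \<Longrightarrow> le (f x) (f y) = le x y"
begin

lemma image_eq: "f ` A = B" using bij unfolding bij_betw_def by blast
lemma inj: "inj_on f A" using bij unfolding bij_betw_def by blast
lemma f_in: "x \<in> A \<Longrightarrow> f x \<in> B" using image_eq by blast
lemma f_eq_iff: "x \<in> A \<Longrightarrow> y \<in> A \<Longrightarrow> f x = f y \<longleftrightarrow> x = y" using inj unfolding inj_on_def by blast

lemma lt_iff: "x \<in> A \<Longrightarrow> y \<in> A \<Longrightarrow> lt le (f x) (f y) = lt le x y"
  unfolding lt_def using le_image_iff f_eq_iff by blast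

lemma restrict_iso: "S \<subseteq> A \<Longrightarrow> order_iso le f S (f ` S)"
  unfolding order_iso_def using inj inj_on_subset le_image_iff by (metis bij_betw_imageI subset_eq)

lemma inverse_iso: "order_iso le (inv_into A f) B A"
proof
  show "bij_betw (inv_into A f) B A" using bij_betw_inv_into[OF bij] .
  fix x y assume x: "x \<in> B" and y: "y \<in> B"
  obtain x0 y0 where "x0 \<in> A" "y0 \<in> A" "x = f x0" "y = f y0" using x y image_eq by blast
  thus "le (inv_into A f x) (inv_into A f y) = le x y"
    using le_image_iff inv_into_f_f[OF inj] by simp
qed

lemma covers_iff:
  assumes x: "x \<in> A" and y: "y \<in> A"
  shows "covers le B (f x) (f y) = covers le A x y"
proof -
  have "(\<exists>z\<in>B. lt le (f x) z \<and> lt le z (f y)) = (\<exists>z\<in>A. lt le x z \<and> lt le z y)"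
    unfolding image_eq[symmetric] using lt_iff x y by auto
  thus ?thesis unfolding covers_def using lt_iff[OF x y] f_in x y by blast
qed

lemma minimal_elems_image:
  assumes S: "S \<subseteq> A"
  shows "minimal_elems le (f ` S) = f ` minimal_elems le S"
proof -
  have "(\<exists>y\<in>f ` S. lt le y (f x)) = (\<exists>y\<in>S. lt le y x)" if "x \<in> S" for x
    using lt_iff S that by auto
  thus ?thesis unfolding minimal_elems_def by auto
qed

lemma upper_bounds_image:
  assumes T: "T \<subseteq> A"
  shows "upper_bounds le B (f ` T) = f ` upper_bounds le A T"
proof -
  have "(\<forall>t\<in>f ` T. le t (f u)) = (\<forall>t\<in>T. le t u)" if "u \<in> A" for u
    using le_image_iff T that by auto
  thus ?thesis unfolding upper_bounds_def image_eq[symmetric] by auto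
qed

lemma joins_image:
  assumes T: "T \<subseteq> A"
  shows "joins le B (f ` T) = f ` joins le A T"
  unfolding joins_def upper_bounds_image[OF T]
    by (rule minimal_elems_image) (auto simp: upper_bounds_def)

lemma bot_image:
  assumes u: "\<exists>!z. z \<in> minimal_elems le A"
  shows "bot le B = f (bot le A)" "\<exists>!z. z \<in> minimal_elems le B"
proof -
  obtain z where z: "minimal_elems le A = {z}" using u by auto
  have "minimal_elems le B = {f z}" using minimal_elems_image[of A] z image_eq by simp
  moreover have "bot le A = z" unfolding bot_def z by simp
  ultimately show "bot le B = f (bot le A)" "\<exists>!z. z \<in> minimal_elems le B" unfolding bot_def
    by simp_all
qed

lemma satchain_image:
  assumes u: "\<exists>!z. z \<in> minimal_elems le A" and s: "satchain le A cs x"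
  shows "satchain le B (map f cs) (f x)"
proof -
  have cs: "cs \<noteq> []" "hd cs = bot le A" "last cs = x" "set cs \<subseteq> A"
    "\<forall>i. Suc i < length cs \<longrightarrow> covers le A (cs ! i) (cs ! Suc i)" using s unfolding satchain_def
      by auto
  show ?thesis unfolding satchain_def
  proof (intro conjI allI impI)
    show "map f cs \<noteq> []" using cs by simp
    show "hd (map f cs) = bot le B" using cs bot_image[OF u] by (simp add: hd_map)
    show "last (map f cs) = f x" using cs by (simp add: last_map)
    show "set (map f cs) \<subseteq> B" using cs image_eq by auto
    fix i assume i: "Suc i < length (map f cs)"
    have m: "cs ! i \<in> A" "cs ! Suc i \<in> A" using cs(4) i by auto
    show "covers le B (map f cs ! i) (map f cs ! Suc i)"
      using covers_iff[OF m] cs(5) i by simp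
  qed
qed

lemma satchain_length_image:
  assumes p: "is_poset le A" and x: "x \<in> B" and cs: "satchain le B cs x" "satchain le B ds x"
  shows "length cs = length ds"
proof -
  interpret inv: order_iso le "inv_into A f" B A by (rule inverse_iso)
  have "\<exists>!z. z \<in> minimal_elems le B"
    using bot_image(2) p unfolding is_poset_def by blast
  then have "satchain le A (map (inv_into A f) cs) (inv_into A f x)"
    "satchain le A (map (inv_into A f) ds) (inv_into A f x)"
    using inv.satchain_image cs by blast+
  moreover have "inv_into A f x \<in> A" using inv.f_in[OF x] .
  ultimately have "length (map (inv_into A f) cs) = length (map (inv_into A f) ds)"
    using p unfolding is_poset_def by blast
  then show ?thesis by simp
qed

lemma is_poset_image:
  assumes p: "is_poset le A"
  shows "is_poset le B"
  unfolding is_poset_def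
proof (intro conjI)
  have u: "\<exists>!z. z \<in> minimal_elems le A" using p unfolding is_poset_def by blast
  show "finite B" using p image_eq unfolding is_poset_def by blast
  show uB: "\<exists>!z. z \<in> minimal_elems le B" using bot_image[OF u] by blast
  have pr: "\<forall>x\<in>A. le x x" "\<forall>x\<in>A. \<forall>y\<in>A. le x y \<and> le y x \<longrightarrow> x = y"
    using p unfolding is_poset_def by blast+
  show "\<forall>x\<in>B. le x x"
  proof
    fix x assume "x \<in> B"
    then obtain x0 where "x0 \<in> A" "x = f x0" using image_eq by blast
    thus "le x x" using pr(1) le_image_iff by simp
  qed
  show "\<forall>x\<in>B. \<forall>y\<in>B. le x y \<and> le y x \<longrightarrow> x = y"
  proof (intro ballI impI)
    fix x y assume "x \<in> B" "y \<in> B" and xy: "le x y \<and> le y x"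
    then obtain x0 y0 where xy0: "x0 \<in> A" "y0 \<in> A" "x = f x0" "y = f y0" using image_eq by blast
    have "le x0 y0" "le y0 x0" using xy xy0 le_image_iff by auto
    hence "x0 = y0" using pr(2) xy0 by blast
    thus "x = y" using xy0 by simp
  qed
  show "\<forall>x\<in>B. \<forall>y\<in>B. \<forall>z\<in>B. le x y \<and> le y z \<longrightarrow> le x z"
  proof (intro ballI impI)
    fix x y z assume "x \<in> B" "y \<in> B" "z \<in> B" and xyz: "le x y \<and> le y z"
    then obtain x0 y0 z0 where xyz0: "x0 \<in> A" "y0 \<in> A" "z0 \<in> A" "x = f x0" "y = f y0" "z = f z0"
      using image_eq by blast
    have "le x0 y0" "le y0 z0" using xyz xyz0 le_image_iff by auto
    hence "le x0 z0" using p xyz0 unfolding is_poset_def by blast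
    thus "le x z" using xyz0 le_image_iff by simp
  qed
  show "\<forall>x\<in>B. \<forall>cs ds. satchain le B cs x \<and> satchain le B ds x \<longrightarrow> length cs = length ds"
    using satchain_length_image[OF p] by blast
qed

lemma cover_chain_image: "cover_chain le A u y n \<Longrightarrow> u \<in> A \<Longrightarrow> cover_chain le B (f u) (f y) n"
proof (induction rule: cover_chain.induct)
  case (cover_chain_0 u) show ?case by (rule cover_chain.cover_chain_0)
next
  case (cover_chain_Suc u y n x)
  have "y \<in> A" "x \<in> A" using cover_chain_Suc.hyps(2) unfolding covers_def by auto
  hence "covers le B (f y) (f x)" using covers_iff cover_chain_Suc.hyps(2) by blast
  from cover_chain.cover_chain_Suc[OF cover_chain_Suc.IH[OF cover_chain_Suc.prems] this] show ?case .
qed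

lemma rk_image:
  assumes p: "is_poset le A" and x: "x \<in> A"
  shows "rk le B (f x) = rk le A x"
proof -
  interpret PA: ranked_poset le A using p by unfold_locales
  interpret PB: ranked_poset le B using is_poset_image[OF p] by unfold_locales
  have u: "\<exists>!z. z \<in> minimal_elems le A" using p unfolding is_poset_def by blast
  have "cover_chain le B (f PA.bottom) (f x) (rk le A x)"
    using cover_chain_image[OF PA.cover_chain_bottom_rk[OF x] PA.bot_in] .
  moreover have "f PA.bottom = PB.bottom" using bot_image[OF u] by simp
  ultimately show ?thesis using PB.rk_cover_chain_bottom by simp
qed

lemma rank_image:
  assumes p: "is_poset le A"
  shows "rank le B = rank le A"
proof -
  have e1: "rk le B ` B = rk le B ` (f ` A)" by (simp only: image_eq)
  have e2: "rk le B ` (f ` A) = (\<lambda>x. rk le B (f x)) ` A" by (rule image_image)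
  have e3: "(\<lambda>x. rk le B (f x)) ` A = rk le A ` A"
    by (rule image_cong[OF refl]) (simp add: rk_image[OF p])
  have "rk le B ` B = rk le A ` A" using e1 e2 e3 by simp
  thus ?thesis unfolding rank_def by simp
qed

lemma atoms_image:
  assumes p: "is_poset le A"
  shows "atoms le B = f ` atoms le A"
proof (rule set_eqI)
  fix z show "z \<in> atoms le B \<longleftrightarrow> z \<in> f ` atoms le A"
  proof
    assume z: "z \<in> atoms le B"
    hence zB: "z \<in> B" and r: "rk le B z = 1" unfolding atoms_def by auto
    obtain z0 where z0: "z0 \<in> A" "z = f z0" using zB image_eq by blast
    have "rk le A z0 = 1" using r rk_image[OF p z0(1)] z0(2) by simp
    thus "z \<in> f ` atoms le A" using z0 unfolding atoms_def by blast
  next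
    assume "z \<in> f ` atoms le A"
    then obtain z0 where z0: "z0 \<in> A" "rk le A z0 = 1" "z = f z0" unfolding atoms_def by blast
    have "rk le B z = 1" using z0 rk_image[OF p z0(1)] by simp
    thus "z \<in> atoms le B" using z0 f_in unfolding atoms_def by blast
  qed
qed

lemma is_lub_image:
  assumes L: "L \<subseteq> A" and T: "T \<subseteq> L" and s: "s \<in> L"
  shows "is_lub le (f ` L) (f ` T) (f s) = is_lub le L T s"
proof -
  have sA: "s \<in> A" using s L by blast
  have TA: "T \<subseteq> A" using T L by blast
  have "(\<forall>t\<in>f ` T. le t (f s)) = (\<forall>t\<in>T. le t s)" using le_image_iff TA sA by auto
  moreover have "(\<forall>u\<in>f ` L. (\<forall>t\<in>f ` T. le t u) \<longrightarrow> le (f s) u) = (\<forall>u\<in>L. (\<forall>t\<in>T. le t u) \<longrightarrow> le s u)"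
  proof -
    have "(\<forall>t\<in>f ` T. le t (f u)) = (\<forall>t\<in>T. le t u)" if "u \<in> L" for u
    proof -
      have uA: "u \<in> A" using that L by blast
      show ?thesis using le_image_iff TA uA by auto
    qed
    moreover have "le (f s) (f u) = le s u" if "u \<in> L" for u using le_image_iff L sA that by auto
    ultimately show ?thesis by auto
  qed
  ultimately show ?thesis unfolding is_lub_def using s by auto
qed

lemma is_glb_image:
  assumes L: "L \<subseteq> A" and T: "T \<subseteq> L" and s: "s \<in> L"
  shows "is_glb le (f ` L) (f ` T) (f s) = is_glb le L T s"
proof -
  have sA: "s \<in> A" using s L by blast
  have TA: "T \<subseteq> A" using T L by blast
  have "(\<forall>t\<in>f ` T. le (f s) t) = (\<forall>t\<in>T. le s t)" using le_image_iff TA sA by auto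
  moreover have "(\<forall>u\<in>f ` L. (\<forall>t\<in>f ` T. le u t) \<longrightarrow> le u (f s)) = (\<forall>u\<in>L. (\<forall>t\<in>T. le u t) \<longrightarrow> le u s)"
  proof -
    have "(\<forall>t\<in>f ` T. le (f u) t) = (\<forall>t\<in>T. le u t)" if "u \<in> L" for u
    proof -
      have uA: "u \<in> A" using that L by blast
      show ?thesis using le_image_iff TA uA by auto
    qed
    moreover have "le (f u) (f s) = le u s" if "u \<in> L" for u using le_image_iff L sA that by auto
    ultimately show ?thesis by auto
  qed
  ultimately show ?thesis unfolding is_glb_def using s by auto
qed

lemma down_image: assumes x: "x \<in> A" shows "down le B (f x) = f ` down le A x"
proof (rule set_eqI)
  fix z show "z \<in> down le B (f x) \<longleftrightarrow> z \<in> f ` down le A x"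
  proof
    assume "z \<in> down le B (f x)"
    hence z: "z \<in> B" "le z (f x)" unfolding down_def by auto
    obtain z0 where z0: "z0 \<in> A" "z = f z0" using z image_eq by blast
    have "le z0 x" using z z0 le_image_iff x by simp
    thus "z \<in> f ` down le A x" using z0 unfolding down_def by blast
  next
    assume "z \<in> f ` down le A x"
    then obtain z0 where z0: "z0 \<in> A" "le z0 x" "z = f z0" unfolding down_def by blast
    thus "z \<in> down le B (f x)" using le_image_iff x f_in unfolding down_def by auto
  qed
qed

lemma up_image: assumes x: "x \<in> A" shows "up le B (f x) = f ` up le A x"
proof (rule set_eqI)
  fix z show "z \<in> up le B (f x) \<longleftrightarrow> z \<in> f ` up le A x"
  proof
    assume "z \<in> up le B (f x)"
    hence z: "z \<in> B" "le (f x) z" unfolding up_def by auto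
    obtain z0 where z0: "z0 \<in> A" "z = f z0" using z image_eq by blast
    have "le x z0" using z z0 le_image_iff x by simp
    thus "z \<in> f ` up le A x" using z0 unfolding up_def by blast
  next
    assume "z \<in> f ` up le A x"
    then obtain z0 where z0: "z0 \<in> A" "le x z0" "z = f z0" unfolding up_def by blast
    thus "z \<in> up le B (f x)" using le_image_iff x f_in unfolding up_def by auto
  qed
qed

lemma join_image:
  assumes p: "is_poset le A" and L: "L \<subseteq> A" and uv: "u \<in> L" "v \<in> L"
    and ex: "\<exists>s. is_lub le L {u, v} s"
  shows "join le (f ` L) (f u) (f v) = f (join le L u v)" "join le L u v \<in> L"
    "is_lub le L {u, v} (join le L u v)"
proof -
  interpret PA: ranked_poset le A using p by unfold_locales
  interpret PB: ranked_poset le B using is_poset_image[OF p] by unfold_locales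
  obtain s where s: "is_lub le L {u, v} s" using ex by blast
  have js: "join le L u v = s" using PA.join_eqI[OF s L] .
  have sL: "s \<in> L" using s unfolding is_lub_def by blast
  have uvL: "{u, v} \<subseteq> L" using uv by blast
  have "is_lub le (f ` L) (f ` {u, v}) (f s)" using iffD2[OF is_lub_image[OF L uvL sL] s] .
  hence l1: "is_lub le (f ` L) {f u, f v} (f s)" by simp
  have fLB: "f ` L \<subseteq> B" using L image_eq by blast
  have "join le (f ` L) (f u) (f v) = f s" using PB.join_eqI[OF l1 fLB] .
  thus "join le (f ` L) (f u) (f v) = f (join le L u v)" "join le L u v \<in> L" "is_lub le L {u, v} (join le L u v)"
    using js sL s by auto
qed

lemma is_lattice_image:
  assumes L: "is_lattice le A"
  shows "is_lattice le B"
  unfolding is_lattice_def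
proof (intro conjI ballI)
  show "is_poset le B" using L is_poset_image unfolding is_lattice_def by blast
  fix x' y' assume "x' \<in> B" "y' \<in> B"
  then obtain x y where xy: "x \<in> A" "y \<in> A" "x' = f x" "y' = f y" using image_eq by blast
  obtain s where s: "is_lub le A {x, y} s" using L xy unfolding is_lattice_def by blast
  then have "is_lub le (f ` A) (f ` {x, y}) (f s)"
    using is_lub_image[of A "{x, y}" s] xy unfolding is_lub_def by blast
  then show "\<exists>s. is_lub le B {x', y'} s" using xy image_eq by auto
  obtain g where g: "is_glb le A {x, y} g" using L xy unfolding is_lattice_def by blast
  then have "is_glb le (f ` A) (f ` {x, y}) (f g)"
    using is_glb_image[of A "{x, y}" g] xy unfolding is_glb_def by blast
  then show "\<exists>s. is_glb le B {x', y'} s" using xy image_eq by auto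
qed

lemma geometric_lattice_image:
  assumes g: "geometric_lattice le A"
  shows "geometric_lattice le B"
proof -
  have L: "is_lattice le A" using g unfolding geometric_lattice_def by blast
  then have p: "is_poset le A" unfolding is_lattice_def by blast
  have cov: "covers le A x y \<longleftrightarrow> (\<exists>a\<in>atoms le A. \<not> le a x \<and> y = join le A x a)"
    if "x \<in> A" "y \<in> A" for x y
    using g that unfolding geometric_lattice_def by blast
  show ?thesis unfolding geometric_lattice_def
  proof (intro conjI ballI is_lattice_image[OF L])
    fix x' y' assume x': "x' \<in> B" and y': "y' \<in> B"
    obtain x y where xy: "x \<in> A" "y \<in> A" "x' = f x" "y' = f y" using x' y' image_eq by blast
    have jq: "join le B (f x) (f a) = f (join le A x a)" "join le A x a \<in> A" if "a \<in> A" for a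
      using join_image(1,2)[OF p _ xy(1) that] L xy(1) that image_eq unfolding is_lattice_def
        by auto
    have "covers le B x' y' = covers le A x y" using covers_iff xy by simp
    also have "\<dots> = (\<exists>a\<in>atoms le A. \<not> le a x \<and> y = join le A x a)" using cov xy by blast
    also have "\<dots> = (\<exists>a\<in>atoms le A. \<not> le (f a) x' \<and> y' = join le B x' (f a))"
    proof -
      have "(\<not> le a x \<and> y = join le A x a) = (\<not> le (f a) x' \<and> y' = join le B x' (f a))"
        if "a \<in> atoms le A" for a
        using atom_in[OF that] le_image_iff xy f_eq_iff jq[OF atom_in[OF that]] by auto
      then show ?thesis by blast
    qed
    also have "\<dots> = (\<exists>a'\<in>atoms le B. \<not> le a' x' \<and> y' = join le B x' a')"
      unfolding atoms_image[OF p] by simp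
    finally show "covers le B x' y' \<longleftrightarrow> (\<exists>a\<in>atoms le B. \<not> le a x' \<and> y' = join le B x' a)" .
  qed
qed

lemma locally_geometric_image:
  assumes lg: "locally_geometric le A"
  shows "locally_geometric le B"
  unfolding locally_geometric_def
proof (intro conjI ballI)
  have p: "is_poset le A" using lg unfolding locally_geometric_def by blast
  show "is_poset le B" using is_poset_image[OF p] .
  fix x' assume x': "x' \<in> B"
  obtain x where x: "x \<in> A" "x' = f x" using x' image_eq by blast
  have D: "down le A x \<subseteq> A" unfolding down_def by blast
  interpret R: order_iso le f "down le A x" "f ` down le A x" using restrict_iso[OF D] .
  have "geometric_lattice le (down le A x)" using lg x unfolding locally_geometric_def by blast
  hence "geometric_lattice le (f ` down le A x)" using R.geometric_lattice_image by blast
  thus "geometric_lattice le (down le B x')" using down_image x by simp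
qed

lemma interval_image:
  assumes "u \<in> A" "v \<in> A"
  shows "{z\<in>B. le (f u) z \<and> lt le z (f v)} = f ` {z\<in>A. le u z \<and> lt le z v}"
proof (rule set_eqI)
  fix z
  show "z \<in> {z\<in>B. le (f u) z \<and> lt le z (f v)} \<longleftrightarrow> z \<in> f ` {z\<in>A. le u z \<and> lt le z v}"
  proof
    assume z: "z \<in> {z\<in>B. le (f u) z \<and> lt le z (f v)}"
    then obtain z0 where z0: "z0 \<in> A" "z = f z0" using image_eq by blast
    then have "le u z0" "lt le z0 v" using z le_image_iff lt_iff assms by auto
    with z0 show "z \<in> f ` {z\<in>A. le u z \<and> lt le z v}" by blast
  next
    assume "z \<in> f ` {z\<in>A. le u z \<and> lt le z v}"
    then show "z \<in> {z\<in>B. le (f u) z \<and> lt le z (f v)}" using le_image_iff lt_iff assms f_in by auto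
  qed
qed

lemma mobius_image:
  assumes p: "is_poset le A" and x: "x \<in> A" and y: "y \<in> A"
  shows "mobius le B (f x) (f y) = mobius le A x y"
proof -
  interpret PA: ranked_poset le A using p by unfold_locales
  interpret PB: ranked_poset le B using is_poset_image[OF p] by unfold_locales
  let ?g = "inv_into A f"
  have gf: "?g (f z) = z" if "z \<in> A" for z using inv_into_f_f[OF inj that] .
  define m' where "m' u v = (if u \<in> B \<and> v \<in> B then mobius le A (?g u) (?g v) else 0)" for u v
  have m'f: "m' (f u) (f v) = mobius le A u v" if "u \<in> A" "v \<in> A" for u v
    unfolding m'_def using that f_in gf by simp
  have "is_mobius le B m'" unfolding is_mobius_def
  proof (intro conjI allI impI ballI)
    fix u v assume "u \<notin> B \<or> v \<notin> B" thus "m' u v = 0" unfolding m'_def by auto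
  next
    fix u' v' assume u': "u' \<in> B" and v': "v' \<in> B"
    obtain u v where uv: "u \<in> A" "v \<in> A" "u' = f u" "v' = f v" using u' v' image_eq by blast
    note S = interval_image[OF uv(1,2)]
    have inj': "inj_on f {z\<in>A. le u z \<and> lt le z v}" by (rule inj_on_subset[OF inj]) auto
    have "(\<Sum>z\<in>{z\<in>B. le (f u) z \<and> lt le z (f v)}. m' (f u) z) = (\<Sum>z\<in>{z\<in>A. le u z \<and> lt le z v}. m' (f u) (f z))"
      unfolding S by (rule sum.reindex[OF inj', unfolded comp_def])
    also have "\<dots> = (\<Sum>z\<in>{z\<in>A. le u z \<and> lt le z v}. mobius le A u z)"
      by (rule sum.cong[OF refl]) (use m'f uv in auto)
    finally have sums: "(\<Sum>z\<in>{z\<in>B. le (f u) z \<and> lt le z (f v)}. m' (f u) z) = (\<Sum>z\<in>{z\<in>A. le u z \<and> lt le z v}. mobius le A u z)" .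
    note rec = PA.mobius_rec[OF uv(1,2)]
    show "m' u' v' = (if u' = v' then 1 else if lt le u' v' then - (\<Sum>z\<in>{z\<in>B. le u' z \<and> lt le z v'}. m' u' z) else 0)"
      unfolding uv(3,4) m'f[OF uv(1,2)] sums using rec f_eq_iff[OF uv(1,2)] lt_iff[OF uv(1,2)]
        by simp
  qed
  hence "mobius le B = m'" by (rule PB.mobius_eqI)
  thus ?thesis using m'f x y by simp
qed

lemma charpoly_image:
  assumes p: "is_poset le A"
  shows "charpoly le B = charpoly le A"
proof -
  have u: "\<exists>!z. z \<in> minimal_elems le A" using p unfolding is_poset_def by blast
  interpret PA: ranked_poset le A using p by unfold_locales
  have bA: "bot le A \<in> A" using PA.bot_in .
  have "charpoly le B = (\<Sum>x\<in>f ` A. monom (mobius le B (bot le B) x) (rank le B - rk le B x))"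
    unfolding charpoly_def image_eq ..
  also have "\<dots> = (\<Sum>x\<in>A. monom (mobius le B (bot le B) (f x)) (rank le B - rk le B (f x)))"
    by (rule sum.reindex[OF inj, unfolded comp_def])
  also have "\<dots> = (\<Sum>x\<in>A. monom (mobius le A (bot le A) x) (rank le A - rk le A x))"
    by (rule sum.cong[OF refl]) (simp add: bot_image(1)[OF u] mobius_image[OF p bA] rank_image[OF p] rk_image[OF p])
  finally show ?thesis unfolding charpoly_def .
qed

lemma subposet_gen_image:
  assumes u: "\<exists>!z. z \<in> minimal_elems le A" and C: "C \<subseteq> A"
  shows "subposet_gen le B (f ` C) = f ` subposet_gen le A C"
proof -
  have "\<Union>{joins le B T | T. T \<subseteq> f ` C \<and> T \<noteq> {}} = f ` \<Union>{joins le A T | T. T \<subseteq> C \<and> T \<noteq> {}}"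
  proof
    show "\<Union>{joins le B T | T. T \<subseteq> f ` C \<and> T \<noteq> {}} \<subseteq> f ` \<Union>{joins le A T | T. T \<subseteq> C \<and> T \<noteq> {}}"
    proof
      fix z assume "z \<in> \<Union>{joins le B T | T. T \<subseteq> f ` C \<and> T \<noteq> {}}"
      then obtain T where T: "T \<subseteq> f ` C" "T \<noteq> {}" "z \<in> joins le B T" by blast
      obtain T0 where T0: "T0 \<subseteq> C" "T = f ` T0" using T(1) subset_image_iff by metis
      have "T0 \<noteq> {}" using T0 T(2) by blast
      moreover have "z \<in> f ` joins le A T0" using joins_image[of T0] T0 C T(3) by blast
      ultimately show "z \<in> f ` \<Union>{joins le A T | T. T \<subseteq> C \<and> T \<noteq> {}}" using T0(1) by blast
    qed
    show "f ` \<Union>{joins le A T | T. T \<subseteq> C \<and> T \<noteq> {}} \<subseteq> \<Union>{joins le B T | T. T \<subseteq> f ` C \<and> T \<noteq> {}}"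
    proof
      fix z assume "z \<in> f ` \<Union>{joins le A T | T. T \<subseteq> C \<and> T \<noteq> {}}"
      then obtain T z0 where T: "T \<subseteq> C" "T \<noteq> {}" "z0 \<in> joins le A T" "z = f z0" by blast
      have "z \<in> joins le B (f ` T)" using joins_image[of T] T C by blast
      moreover have "f ` T \<subseteq> f ` C" "f ` T \<noteq> {}" using T by auto
      ultimately show "z \<in> \<Union>{joins le B T | T. T \<subseteq> f ` C \<and> T \<noteq> {}}" by blast
    qed
  qed
  thus ?thesis unfolding subposet_gen_def bot_image(1)[OF u] by simp
qed


lemma order_iso_up: "a \<in> A \<Longrightarrow> order_iso le f (up le A a) (up le B (f a))"
  using restrict_iso[of "up le A a"] up_image by (simp add: up_def)

lemma order_iso_deletion:
  assumes p: "is_poset le A" and a: "a \<in> atoms le A"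
  shows "order_iso le f (subposet_gen le A (atoms le A - {a})) (subposet_gen le B (atoms le B - {f a}))"
proof -
  have u: "\<exists>!z. z \<in> minimal_elems le A" using p unfolding is_poset_def by blast
  have atA: "atoms le A \<subseteq> A" using atom_in by (rule subsetI)
  have "atoms le B - {f a} = f ` (atoms le A - {a})"
    unfolding atoms_image[OF p] using inj atA a by (auto simp: inj_on_def)
  then have "subposet_gen le B (atoms le B - {f a}) = f ` subposet_gen le A (atoms le A - {a})"
    using subposet_gen_image[OF u, of "atoms le A - {a}"] atA by auto
  moreover have "subposet_gen le A (atoms le A - {a}) \<subseteq> A"
    by (rule ranked_poset.subposet_gen_subset) (unfold_locales, fact p)
  ultimately show ?thesis using restrict_iso by simp
qed
end

lemma inductive_is_poset: "inductive_poset le P \<Longrightarrow> is_poset le P"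
proof (induction rule: inductive_poset.induct)
  case (base z)
  have min: "minimal_elems le {z} = {z}" unfolding minimal_elems_def lt_def by auto
  show ?case unfolding is_poset_def
  proof (intro conjI)
    show "\<exists>!za. za \<in> minimal_elems le {z}" using min by simp
    show "\<forall>x\<in>{z}. \<forall>cs ds. satchain le {z} cs x \<and> satchain le {z} ds x \<longrightarrow> length cs = length ds"
    proof (intro ballI allI impI)
      fix x cs ds assume "x \<in> {z}" and c: "satchain le {z} cs x \<and> satchain le {z} ds x"
      have l1: "length xs = 1" if s: "satchain le {z} xs x" for xs
      proof (rule ccontr)
        assume "length xs \<noteq> 1"
        moreover have "xs \<noteq> []" using s unfolding satchain_def by blast
        ultimately have "Suc 0 < length xs" by (cases xs) auto
        hence "covers le {z} (xs ! 0) (xs ! Suc 0)" using s unfolding satchain_def by blast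
        thus False unfolding covers_def lt_def by auto
      qed
      show "length cs = length ds" using l1 c by simp
    qed
  qed (use base in auto)
next
  case (step P a) thus ?case unfolding locally_geometric_def by blast
qed

lemma inductive_poset_order_iso:
  assumes "inductive_poset le A" "order_iso le f A B"
  shows "inductive_poset le B"
  using assms
proof (induction arbitrary: f B rule: inductive_poset.induct)
  case (base z)
  interpret order_iso le f "{z}" B by (rule base.prems)
  have "B = {f z}" using image_eq by simp
  moreover have "le (f z) (f z)" using le_image_iff base.hyps by simp
  ultimately show ?case using inductive_poset.base by simp
next
  case (step A a)
  interpret order_iso le f A B by (rule step.prems)
  have p: "is_poset le A" using step.hyps(1) unfolding locally_geometric_def by blast
  note iso_up = order_iso_up[OF atom_in[OF step.hyps(2)]]
  note iso_del = order_iso_deletion[OF p step.hyps(2)]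
  show ?case
  proof (rule inductive_poset.step)
    show "locally_geometric le B" using locally_geometric_image[OF step.hyps(1)] .
    show "f a \<in> atoms le B" using atoms_image[OF p] step.hyps(2) by blast
    show "inductive_poset le (up le B (f a))" using step.IH(1)[OF iso_up] .
    show "inductive_poset le (subposet_gen le B (atoms le B - {f a}))"
      using step.IH(2)[OF iso_del] .
    show "charpoly le (up le B (f a)) dvd charpoly le (subposet_gen le B (atoms le B - {f a}))"
      using order_iso.charpoly_image[OF iso_up inductive_is_poset[OF step.hyps(3)]]
        order_iso.charpoly_image[OF iso_del inductive_is_poset[OF step.hyps(4)]] step.hyps(5)
      by simp
  qed
qed

section \<open>Ideals of corank one\<close>

text \<open>The properties of a TM-ideal \<open>Q\<close> of corank one that the counting arguments need. Unlike
  \<open>TM_ideal\<close>, they are inherited by the subposets \<open>P(B)\<close> between \<open>Q\<close> and \<open>P\<close>.\<close>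

locale tm_step = ranked_poset +
  fixes Q :: "'a set"
  assumes Q_ideal: "order_ideal le P Q"
    and Q_nonempty: "Q \<noteq> {}"
    and Q_proper: "Q \<noteq> P"
    and new_atom_join: "\<And>b w. b \<in> atoms le P \<Longrightarrow> b \<notin> Q \<Longrightarrow> w \<in> Q \<Longrightarrow>
      \<exists>z. joins le P {b, w} = {z} \<and> rk le P z = Suc (rk le P w)"
    and ex_projection: "\<And>x. x \<in> P \<Longrightarrow> x \<notin> Q \<Longrightarrow>
      \<exists>y\<in>Q. le y x \<and> rk le P x = Suc (rk le P y) \<and> (\<forall>q\<in>Q. le q x \<longrightarrow> le q y)"
    and ex_new_atom_below: "\<And>x. x \<in> P \<Longrightarrow> x \<notin> Q \<Longrightarrow> \<exists>b\<in>atoms le P. b \<notin> Q \<and> le b x"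
begin

lemma Q_subset: "Q \<subseteq> P"
  using Q_ideal unfolding order_ideal_def by blast

lemma Q_down_closed: "x \<in> Q \<Longrightarrow> y \<in> P \<Longrightarrow> le y x \<Longrightarrow> y \<in> Q"
  using Q_ideal unfolding order_ideal_def by blast

lemma bottom_in_Q: "bottom \<in> Q"
  using bottom_in_order_ideal[OF Q_ideal Q_nonempty] .

lemma ranked_poset_Q: "ranked_poset le Q"
  using ranked_poset_order_ideal[OF Q_ideal Q_nonempty] .

lemma bot_Q: "bot le Q = bottom"
  using bot_order_ideal[OF Q_ideal Q_nonempty] .

lemma rk_Q: "x \<in> Q \<Longrightarrow> rk le Q x = rk le P x"
  using rk_order_ideal[OF Q_ideal Q_nonempty] .

definition new_atoms :: "'a set" where
  "new_atoms = atoms le P - Q"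

definition proj :: "'a \<Rightarrow> 'a" where
  "proj x = (THE y. y \<in> Q \<and> le y x \<and> (\<forall>q\<in>Q. le q x \<longrightarrow> le q y))"

definition atom_join :: "'a \<Rightarrow> 'a \<Rightarrow> 'a" where
  "atom_join b w = (THE z. joins le P {b, w} = {z})"

lemma finite_new_atoms: "finite new_atoms"
  using finite_carrier atom_in_P finite_subset unfolding new_atoms_def
    by (metis Diff_subset subsetI)

lemma new_atom_in: "b \<in> new_atoms \<Longrightarrow> b \<in> P" and new_atom_notin_Q: "b \<in> new_atoms \<Longrightarrow> b \<notin> Q"
  unfolding new_atoms_def using atom_in_P by auto

lemma
  assumes "x \<in> P" "x \<notin> Q"
  shows proj_in_Q: "proj x \<in> Q" and proj_le: "le (proj x) x"
    and rk_proj: "rk le P x = Suc (rk le P (proj x))"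
    and le_proj: "\<And>q. q \<in> Q \<Longrightarrow> le q x \<Longrightarrow> le q (proj x)"
proof -
  obtain y where y: "y \<in> Q" "le y x" "rk le P x = Suc (rk le P y)" "\<forall>q\<in>Q. le q x \<longrightarrow> le q y"
    using ex_projection[OF assms] by blast
  have "proj x = y" unfolding proj_def
  proof (rule the_equality)
    show "y \<in> Q \<and> le y x \<and> (\<forall>q\<in>Q. le q x \<longrightarrow> le q y)" using y by blast
    fix y' assume "y' \<in> Q \<and> le y' x \<and> (\<forall>q\<in>Q. le q x \<longrightarrow> le q y')"
    with y show "y' = y" using antisym_le Q_subset by blast
  qed
  with y show "proj x \<in> Q" "le (proj x) x" "rk le P x = Suc (rk le P (proj x))"
    "\<And>q. q \<in> Q \<Longrightarrow> le q x \<Longrightarrow> le q (proj x)"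
    by auto
qed

lemma proj_mono:
  assumes "z \<in> P" "z \<notin> Q" "x \<in> P" "x \<notin> Q" "le z x"
  shows "le (proj z) (proj x)"
proof -
  have "proj z \<in> P" using proj_in_Q[OF assms(1,2)] Q_subset by blast
  then have "le (proj z) x" using trans_le proj_le[OF assms(1,2)] assms by blast
  then show ?thesis using le_proj[OF assms(3,4) proj_in_Q[OF assms(1,2)]] by blast
qed

lemma
  assumes b: "b \<in> new_atoms" and w: "w \<in> Q"
  shows joins_atom_join: "joins le P {b, w} = {atom_join b w}"
    and rk_atom_join: "rk le P (atom_join b w) = Suc (rk le P w)"
    and atom_join_in: "atom_join b w \<in> P"
    and le_atom_join_atom: "le b (atom_join b w)"
    and le_atom_join: "le w (atom_join b w)"
    and atom_join_notin_Q: "atom_join b w \<notin> Q"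
    and atom_join_least: "\<And>u. u \<in> P \<Longrightarrow> le b u \<Longrightarrow> le w u \<Longrightarrow> le (atom_join b w) u"
proof -
  obtain z where z: "joins le P {b, w} = {z}" "rk le P z = Suc (rk le P w)"
    using new_atom_join[of b w] b w unfolding new_atoms_def by blast
  then have j: "joins le P {b, w} = {atom_join b w}" "rk le P (atom_join b w) = Suc (rk le P w)"
    unfolding atom_join_def by simp_all
  then show "joins le P {b, w} = {atom_join b w}" "rk le P (atom_join b w) = Suc (rk le P w)" .
  have "atom_join b w \<in> joins le P {b, w}" using j by blast
  then show jP: "atom_join b w \<in> P" and bj: "le b (atom_join b w)" and "le w (atom_join b w)"
    unfolding mem_joins_iff by auto
  show "atom_join b w \<notin> Q"
    using Q_down_closed[OF _ new_atom_in[OF b] bj] new_atom_notin_Q[OF b] by blast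
  show "\<And>u. u \<in> P \<Longrightarrow> le b u \<Longrightarrow> le w u \<Longrightarrow> le (atom_join b w) u"
    using joins_singleton_le[OF j(1)] by blast
qed

lemma proj_atom_join:
  assumes b: "b \<in> new_atoms" and w: "w \<in> Q"
  shows "proj (atom_join b w) = w"
proof -
  note j = atom_join_in[OF b w] atom_join_notin_Q[OF b w]
  have "le w (proj (atom_join b w))" using le_proj[OF j w le_atom_join[OF b w]] .
  moreover have "rk le P (proj (atom_join b w)) = rk le P w"
    using rk_proj[OF j] rk_atom_join[OF b w] by simp
  moreover have "w \<in> P" "proj (atom_join b w) \<in> P" using w proj_in_Q[OF j] Q_subset by auto
  ultimately show ?thesis using eq_of_le_rk_eq by metis
qed

lemma atom_join_proj:
  assumes x: "x \<in> P" "x \<notin> Q" and b: "b \<in> new_atoms" "le b x"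
  shows "atom_join b (proj x) = x"
proof -
  note p = proj_in_Q[OF x]
  have "le (atom_join b (proj x)) x" using atom_join_least[OF b(1) p x(1) b(2) proj_le[OF x]] .
  moreover have "rk le P (atom_join b (proj x)) = rk le P x"
    using rk_atom_join[OF b(1) p] rk_proj[OF x] by simp
  ultimately show ?thesis using eq_of_le_rk_eq atom_join_in[OF b(1) p] x(1) by blast
qed

lemma le_iff_proj_le:
  assumes b: "b \<in> new_atoms" and z: "z \<in> P" "z \<notin> Q" "le b z" and x: "x \<in> P" "x \<notin> Q" "le b x"
  shows "le z x \<longleftrightarrow> le (proj z) (proj x)"
proof
  assume "le z x"
  then show "le (proj z) (proj x)" using proj_mono z x by blast
next
  assume le_proj_zx: "le (proj z) (proj x)"
  have "le (proj z) x"
    using trans_le[OF _ _ x(1) le_proj_zx proj_le[OF x(1,2)]] proj_in_Q[OF z(1,2)] proj_in_Q[OF x(1,2)]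
      Q_subset by blast
  with atom_join_least[OF b proj_in_Q[OF z(1,2)] x(1) x(3)] show "le z x"
    using atom_join_proj[OF z(1,2) b z(3)] by simp
qed

lemma proj_bij_betw: "b \<in> new_atoms \<Longrightarrow> bij_betw proj {x\<in>P - Q. le b x} Q"
  by (rule bij_betw_byWitness[where f' = "atom_join b"])
    (use atom_join_proj proj_atom_join proj_in_Q atom_join_in atom_join_notin_Q le_atom_join_atom in auto)

lemma order_iso_atom_join:
  assumes a: "a \<in> new_atoms"
  shows "order_iso le (atom_join a) Q (up le P a)"
proof
  have "up le P a = {x\<in>P - Q. le a x}"
    using Q_down_closed new_atom_in[OF a] new_atom_notin_Q[OF a] unfolding up_def by blast
  then show "bij_betw (atom_join a) Q (up le P a)"
    by (intro bij_betw_byWitness[where f' = proj])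
      (use a atom_join_proj proj_atom_join proj_in_Q atom_join_in atom_join_notin_Q
        le_atom_join_atom in auto)
next
  fix u v assume u: "u \<in> Q" and v: "v \<in> Q"
  then show "le (atom_join a u) (atom_join a v) = le u v"
    using le_iff_proj_le[OF a] atom_join_in[OF a] atom_join_notin_Q[OF a] le_atom_join_atom[OF a]
      proj_atom_join[OF a] by metis
qed

lemma sum_card_new_atoms_below:
  fixes g :: "'a \<Rightarrow> 'b::comm_semiring_1"
  assumes "finite S"
  shows "(\<Sum>x\<in>S. of_nat (card {b\<in>new_atoms. le b x}) * g x) = (\<Sum>b\<in>new_atoms. \<Sum>x\<in>{x\<in>S. le b x}. g x)"
proof -
  have "(\<Sum>x\<in>S. of_nat (card {b\<in>new_atoms. le b x}) * g x) = (\<Sum>x\<in>S. \<Sum>b\<in>{b\<in>new_atoms. le b x}. g x)"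
    by simp
  also have "\<dots> = (\<Sum>b\<in>new_atoms. \<Sum>x\<in>{x\<in>S. le b x}. g x)"
    by (rule sum.swap_restrict[OF assms finite_new_atoms])
  finally show ?thesis .
qed

end

context tm_step
begin

lemma lt_iff_proj_lt:
  assumes b: "b \<in> new_atoms" and z: "z \<in> P" "z \<notin> Q" "le b z" and x: "x \<in> P" "x \<notin> Q" "le b x"
  shows "lt le z x \<longleftrightarrow> lt le (proj z) (proj x)"
  using le_iff_proj_le[OF assms] atom_join_proj[OF z(1,2) b z(3)] atom_join_proj[OF x(1,2) b x(3)]
  unfolding lt_def by metis

lemma sum_mobius_proj_below:
  assumes b: "b \<in> new_atoms" "le b x" and x: "x \<in> P" "x \<notin> Q"
  shows "(\<Sum>z\<in>{z\<in>P - Q. lt le z x \<and> le b z}. mobius le P bottom (proj z))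
    = (if proj x = bottom then 1 else 0) - mobius le P bottom (proj x)"
proof -
  have "bij_betw proj {z\<in>P - Q. lt le z x \<and> le b z} {w\<in>Q. lt le w (proj x)}"
  proof (rule bij_betw_byWitness[where f' = "atom_join b"])
    show "\<forall>z\<in>{z\<in>P - Q. lt le z x \<and> le b z}. atom_join b (proj z) = z"
      using atom_join_proj b(1) by blast
    show "\<forall>w\<in>{w\<in>Q. lt le w (proj x)}. proj (atom_join b w) = w"
      using proj_atom_join b(1) by blast
    show "proj ` {z\<in>P - Q. lt le z x \<and> le b z} \<subseteq> {w\<in>Q. lt le w (proj x)}"
      using lt_iff_proj_lt[OF b(1) _ _ _ x b(2)] proj_in_Q by blast
    show "atom_join b ` {w\<in>Q. lt le w (proj x)} \<subseteq> {z\<in>P - Q. lt le z x \<and> le b z}"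
    proof clarify
      fix w assume w: "w \<in> Q" "lt le w (proj x)"
      note j = atom_join_in[OF b(1) w(1)] atom_join_notin_Q[OF b(1) w(1)] le_atom_join_atom[OF b(1) w(1)]
      then show "atom_join b w \<in> P - Q \<and> lt le (atom_join b w) x \<and> le b (atom_join b w)"
        using lt_iff_proj_lt[OF b(1) j x b(2)] proj_atom_join[OF b(1) w(1)] w(2) by simp
    qed
  qed
  then have "(\<Sum>z\<in>{z\<in>P - Q. lt le z x \<and> le b z}. mobius le P bottom (proj z))
      = (\<Sum>w\<in>{w\<in>Q. lt le w (proj x)}. mobius le P bottom w)"
    by (rule sum.reindex_bij_betw)
  also have "{w\<in>Q. lt le w (proj x)} = {z\<in>P. lt le z (proj x)}"
    using Q_subset Q_down_closed[OF proj_in_Q[OF x]] unfolding lt_def by blast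
  finally show ?thesis
    using sum_mobius_bottom_lt proj_in_Q[OF x] Q_subset by auto
qed

lemma lt_eq_below_proj_Un:
  assumes x: "x \<in> P" "x \<notin> Q"
  shows "{z\<in>P. lt le z x} = {z\<in>P. le z (proj x)} \<union> {z\<in>P - Q. lt le z x}"
    and "{z\<in>P. le z (proj x)} \<inter> {z\<in>P - Q. lt le z x} = {}"
proof -
  have pQ: "proj x \<in> Q" "proj x \<in> P" using proj_in_Q[OF x] Q_subset by auto
  have "z \<in> Q" if "z \<in> P" "le z (proj x)" for z
    using Q_down_closed[OF pQ(1) that] .
  moreover have "lt le z x" if "z \<in> P" "le z (proj x)" for z
    using that trans_le[OF that(1) pQ(2) x(1) that(2) proj_le[OF x]] x(2) Q_down_closed[OF pQ(1)]
    unfolding lt_def by blast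
  moreover have "le z (proj x)" if "z \<in> Q" "lt le z x" for z
    using le_proj[OF x that(1)] that(2) unfolding lt_def by blast
  ultimately show "{z\<in>P. lt le z x} = {z\<in>P. le z (proj x)} \<union> {z\<in>P - Q. lt le z x}"
    and "{z\<in>P. le z (proj x)} \<inter> {z\<in>P - Q. lt le z x} = {}"
    by blast+
qed

lemma new_atoms_below_atom:
  assumes "x \<in> new_atoms"
  shows "{b\<in>new_atoms. le b x} = {x}"
  using assms le_atomD[of x] atom_neq_bottom refl_le new_atom_in unfolding new_atoms_def by blast

lemma mem_new_atoms_if_proj_bottom: "x \<in> P \<Longrightarrow> x \<notin> Q \<Longrightarrow> proj x = bottom \<Longrightarrow> x \<in> new_atoms"
  using rk_proj rk_bottom unfolding new_atoms_def atoms_def by simp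

lemma mobius_bottom_eq_sum_outside_Q:
  assumes "x \<in> P" "x \<notin> Q"
  shows "mobius le P bottom x
    = - ((if proj x = bottom then 1 else 0) + (\<Sum>z\<in>{z\<in>P - Q. lt le z x}. mobius le P bottom z))"
proof -
  have pP: "proj x \<in> P" using proj_in_Q[OF assms] Q_subset by blast
  have "mobius le P bottom x = - (\<Sum>z\<in>{z\<in>P. lt le z x}. mobius le P bottom z)"
    using mobius_bottom_rec assms bottom_in_Q by metis
  also have "\<dots> = - ((\<Sum>z\<in>{z\<in>P. le z (proj x)}. mobius le P bottom z)
      + (\<Sum>z\<in>{z\<in>P - Q. lt le z x}. mobius le P bottom z))"
    unfolding lt_eq_below_proj_Un(1)[OF assms]
    using lt_eq_below_proj_Un(2)[OF assms] finite_carrier by (simp add: sum.union_disjoint)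
  finally show ?thesis using sum_mobius_bottom[OF pP] by simp
qed

lemma mobius_bottom_outside_Q:
  assumes "x \<in> P" "x \<notin> Q"
  shows "mobius le P bottom x = - of_nat (card {b\<in>new_atoms. le b x}) * mobius le P bottom (proj x)"
  using assms
proof (induction "rk le P x" arbitrary: x rule: less_induct)
  case less
  let ?\<mu> = "mobius le P bottom"
  define Z where "Z = {z\<in>P - Q. lt le z x}"
  define \<delta> :: int where "\<delta> = (if proj x = bottom then 1 else 0)"
  have mu_x: "?\<mu> x = - (\<delta> + (\<Sum>z\<in>Z. ?\<mu> z))"
    using mobius_bottom_eq_sum_outside_Q[OF less.prems] unfolding Z_def \<delta>_def .
  have "(\<Sum>z\<in>Z. ?\<mu> z) = - (\<Sum>z\<in>Z. of_nat (card {b\<in>new_atoms. le b z}) * ?\<mu> (proj z))"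
    using less.hyps rk_less_of_lt less.prems unfolding Z_def by (simp add: sum_negf)
  also have "\<dots> = - (\<Sum>b\<in>new_atoms. \<Sum>z\<in>{z\<in>Z. le b z}. ?\<mu> (proj z))"
    using finite_carrier unfolding Z_def by (subst sum_card_new_atoms_below) simp_all
  also have "\<dots> = - (\<Sum>b\<in>new_atoms. if le b x then \<delta> - ?\<mu> (proj x) else 0)"
  proof (intro arg_cong[where f = uminus] sum.cong refl)
    fix b assume b: "b \<in> new_atoms"
    show "(\<Sum>z\<in>{z\<in>Z. le b z}. ?\<mu> (proj z)) = (if le b x then \<delta> - ?\<mu> (proj x) else 0)"
    proof (cases "le b x")
      case True
      have "{z\<in>Z. le b z} = {z\<in>P - Q. lt le z x \<and> le b z}"
        unfolding Z_def by blast
      with True show ?thesis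
        using sum_mobius_proj_below[OF b True less.prems] unfolding \<delta>_def by presburger
    next
      case False
      then have "{z\<in>Z. le b z} = {}"
        using trans_le new_atom_in[OF b] less.prems(1) unfolding Z_def lt_def by blast
      with False show ?thesis by (simp only: sum.empty if_False)
    qed
  qed
  also have "\<dots> = - (of_nat (card {b\<in>new_atoms. le b x}) * (\<delta> - ?\<mu> (proj x)))"
    using finite_new_atoms by (simp add: sum.If_cases Int_def)
  finally have "?\<mu> x = of_nat (card {b\<in>new_atoms. le b x}) * (\<delta> - ?\<mu> (proj x)) - \<delta>"
    using mu_x by simp
  then show ?case
    using new_atoms_below_atom[OF mem_new_atoms_if_proj_bottom[OF less.prems]] mobius_bottom
    unfolding \<delta>_def by (cases "proj x = bottom") simp_all
qed

lemma rank_eq_Suc_rank_Q: "rank le P = Suc (rank le Q)"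
proof -
  interpret Q: ranked_poset le Q by (rule ranked_poset_Q)
  have "rk le P x \<le> Suc (rank le Q)" if x: "x \<in> P" for x
  proof (cases "x \<in> Q")
    case True
    then show ?thesis using Q.rk_le_rank rk_Q by fastforce
  next
    case False
    then show ?thesis using Q.rk_le_rank[OF proj_in_Q] rk_Q[OF proj_in_Q] rk_proj x by simp
  qed
  moreover obtain w where w: "w \<in> Q" "rk le Q w = rank le Q" using Q.rank_attained by blast
  moreover obtain b where "b \<in> new_atoms"
    using ex_new_atom_below Q_proper Q_subset unfolding new_atoms_def by blast
  ultimately show ?thesis
    unfolding rank_def[of le P]
    using rk_atom_join[of b w] atom_join_in[of b w] rk_Q[of w] finite_carrier
    by (intro Max_eqI) (auto intro!: image_eqI)
qed

lemma charpoly_factor: "charpoly le P = (monom 1 1 - of_nat (card new_atoms)) * charpoly le Q"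
proof -
  interpret Q: ranked_poset le Q by (rule ranked_poset_Q)
  let ?\<mu> = "mobius le P bottom"
  define g where "g x = monom (?\<mu> (proj x)) (rank le Q - rk le P (proj x))" for x
  have charpoly_Q: "charpoly le Q = (\<Sum>w\<in>Q. monom (?\<mu> w) (rank le Q - rk le P w))"
    unfolding charpoly_def bot_Q
    by (rule sum.cong[OF refl]) (simp add: rk_Q mobius_order_ideal[OF Q_ideal Q_nonempty bottom_in_Q])
  have "charpoly le P = (\<Sum>x\<in>P - Q. monom (?\<mu> x) (rank le P - rk le P x))
      + (\<Sum>x\<in>Q. monom (?\<mu> x) (rank le P - rk le P x))"
    unfolding charpoly_def by (rule sum.subset_diff[OF Q_subset finite_carrier])
  also have "(\<Sum>x\<in>Q. monom (?\<mu> x) (rank le P - rk le P x)) = monom 1 1 * charpoly le Q"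
  proof -
    have "rank le P - rk le P x = 1 + (rank le Q - rk le P x)" if "x \<in> Q" for x
      using Q.rk_le_rank[OF that] rk_Q[OF that] rank_eq_Suc_rank_Q by simp
    then show ?thesis
      unfolding charpoly_Q sum_distrib_left by (intro sum.cong) (simp_all add: mult_monom)
  qed
  also have "(\<Sum>x\<in>P - Q. monom (?\<mu> x) (rank le P - rk le P x))
      = - (\<Sum>x\<in>P - Q. of_nat (card {b\<in>new_atoms. le b x}) * g x)"
  proof -
    have "monom (?\<mu> x) (rank le P - rk le P x) = - (of_nat (card {b\<in>new_atoms. le b x}) * g x)"
      if "x \<in> P - Q" for x
      using that mobius_bottom_outside_Q rank_eq_Suc_rank_Q rk_proj
      unfolding g_def of_nat_mult_conv_smult smult_monom by (simp add: minus_monom)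
    then show ?thesis by (simp add: sum_negf)
  qed
  also have "(\<Sum>x\<in>P - Q. of_nat (card {b\<in>new_atoms. le b x}) * g x) = (\<Sum>b\<in>new_atoms. charpoly le Q)"
    unfolding sum_card_new_atoms_below[OF finite_Diff[OF finite_carrier]] charpoly_Q g_def
    by (intro sum.cong refl sum.reindex_bij_betw proj_bij_betw)
  finally show ?thesis by (simp add: algebra_simps)
qed

end

section \<open>TM-ideals of corank one\<close>


context locally_geometric_poset
begin

lemma modular_meet_join_cancel:
  assumes m: "m \<in> P" and c: "modular_elem le (down le P m) c" and x: "x \<in> down le P m"
    and s: "s \<in> P" "le (meet le (down le P m) c x) s" "le s c"
  shows "meet le (down le P m) c (join le (down le P m) x s) = s"
proof -
  let ?L = "down le P m"
  have cL: "c \<in> ?L" using c unfolding modular_elem_def by blast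
  have sL: "s \<in> ?L" using s cL trans_le[OF s(1) _ m s(3)] unfolding down_def by blast
  have "\<forall>u\<in>?L. \<forall>v\<in>?L. le v c \<longrightarrow> meet le ?L c (join le ?L u v) = join le ?L (meet le ?L c u) v"
    using c unfolding modular_elem_def by blast
  then have "meet le ?L c (join le ?L x s) = join le ?L (meet le ?L c x) s"
    using x sL s(3) by blast
  also have "\<dots> = s"
    by (rule join_eqI[OF _ down_subset]) (use sL s(2) refl_le[OF s(1)] in \<open>auto simp: is_lub_def\<close>)
  finally show ?thesis .
qed

text \<open>The modular law makes \<open>s \<mapsto> x \<squnion> s\<close> injective on the interval \<open>[c \<sqinter> x, c]\<close>, so the rank
  of \<open>x\<close> exceeds that of \<open>c \<sqinter> x\<close> by at most the corank of \<open>c\<close>.\<close>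

lemma rk_le_Suc_rk_meet_modular:
  assumes m: "m \<in> P" and c: "modular_elem le (down le P m) c" and x: "x \<in> P" "le x m"
    and rk_m: "rk le P m \<le> Suc (rk le P c)"
  shows "rk le P x \<le> Suc (rk le P (meet le (down le P m) c x))"
proof -
  let ?L = "down le P m"
  define y where "y = meet le ?L c x"
  define f where "f s = join le ?L x s" for s
  have cL: "c \<in> ?L" using c unfolding modular_elem_def by blast
  have cP: "c \<in> P" and cm: "le c m" using cL unfolding down_def by auto
  have xL: "x \<in> ?L" using x unfolding down_def by blast
  have G: "is_glb le ?L {c, x} y" unfolding y_def using is_glb_meet_down[OF m cL xL] .
  then have yL: "y \<in> ?L" and yc: "le y c" and yx: "le y x" unfolding is_glb_def by auto
  then have yP: "y \<in> P" unfolding down_def by blast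
  have sL: "s \<in> ?L" if "s \<in> P" "le s c" for s
    using that trans_le[OF that(1) cP m that(2) cm] unfolding down_def by blast
  have fL: "f s \<in> ?L" "le x (f s)" "le s (f s)" if "s \<in> ?L" for s
    using is_lub_join_down[OF m xL that] unfolding f_def is_lub_def by auto
  have f_ret: "meet le ?L c (f s) = s" if "s \<in> P" "le y s" "le s c" for s
    using modular_meet_join_cancel[OF m c xL that[unfolded y_def]] unfolding f_def .
  have f_strict_mono: "le (f s) (f t) \<and> f s \<noteq> f t"
    if st: "s \<in> P" "t \<in> P" "le y s" "le s t" "le t c" "s \<noteq> t" for s t
  proof
    have sc: "le s c" using trans_le[OF st(1,2) cP st(4,5)] .
    have "le s (f t)"
      using trans_le[OF st(1,2) _ st(4)] fL(3)[OF sL[OF st(2,5)]] fL(1)[OF sL[OF st(2,5)]]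
      unfolding down_def by blast
    then show "le (f s) (f t)"
      using is_lub_join_down[OF m xL sL[OF st(1) sc]] fL[OF sL[OF st(2,5)]]
        unfolding f_def is_lub_def
      by blast
    show "f s \<noteq> f t"
      using f_ret[OF st(1,3) sc] f_ret[OF st(2) trans_le[OF yP st(1,2) st(3,4)] st(5)] st(6)
        by metis
  qed
  have "f y = x"
    unfolding f_def
    by (rule join_eqI[OF _ down_subset]) (use xL yx refl_le[OF x(1)] in \<open>auto simp: is_lub_def\<close>)
  moreover have "rk le P (f y) + (rk le P c - rk le P y) \<le> rk le P (f c)"
    by (rule rk_strict_mono_image[OF yP cP yc _ f_strict_mono])
      (use fL sL down_subset in blast)
  ultimately have "rk le P x + (rk le P c - rk le P y) \<le> rk le P (f c)" by simp
  moreover have "rk le P (f c) \<le> rk le P m"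
    using fL(1)[OF cL] rk_mono m unfolding down_def by blast
  moreover have "rk le P y \<le> rk le P c" using rk_mono[OF yP cP yc] .
  ultimately have "rk le P x \<le> Suc (rk le P y)" using rk_m by linarith
  then show ?thesis unfolding y_def .
qed

lemma le_maximal_elem_of_join_closed:
  assumes "join_closed le P Q" "Q \<subseteq> P" "c \<in> maximal_elems le Q"
    and m: "m \<in> P" "le c m" and q: "q \<in> Q" "le q m"
  shows "le q c"
proof -
  have cQ: "c \<in> Q" and c_max: "\<forall>y\<in>Q. le c y \<longrightarrow> y = c"
    using assms(3) unfolding maximal_elems_iff by blast+
  have qP: "q \<in> P" "c \<in> P" using q cQ assms(2) by auto
  define s where "s = join le (down le P m) q c"
  have s: "s \<in> joins le P {q, c}" unfolding s_def using join_in_joins[OF m(1) q(2) m(2) qP] .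
  moreover have "joins le P {q, c} \<subseteq> Q"
    using assms(1) q(1) cQ unfolding join_closed_def by simp
  ultimately have "s \<in> Q" by blast
  moreover have "le c s" "le q s" using s unfolding mem_joins_iff by auto
  ultimately show ?thesis using c_max by metis
qed

lemma M_ideal_ex_projection:
  assumes M: "M_ideal le P Q" and Q_nonempty: "Q \<noteq> {}" and rk_P: "rank le P = Suc (rank le Q)"
    and x: "x \<in> P" "x \<notin> Q"
  shows "\<exists>y\<in>Q. le y x \<and> rk le P x = Suc (rk le P y) \<and> (\<forall>q\<in>Q. le q x \<longrightarrow> le q y)"
proof -
  have Q: "order_ideal le P Q" and pure: "pure le Q" and join_closed: "join_closed le P Q"
    and modular: "\<forall>x\<in>maximal_elems le P. \<exists>y\<in>maximal_elems le Q. modular_elem le (down le P x) y"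
    using M unfolding M_ideal_def by blast+
  have Q_subset: "Q \<subseteq> P" and Q_down_closed: "\<forall>x\<in>Q. \<forall>y\<in>P. le y x \<longrightarrow> y \<in> Q"
    using Q unfolding order_ideal_def by blast+
  interpret Q: ranked_poset le Q using ranked_poset_order_ideal[OF Q Q_nonempty] .
  obtain m where m: "m \<in> P" "le x m" "\<forall>y\<in>P. le m y \<longrightarrow> y = m"
    using ex_maximal_above[OF subset_refl x(1)] by blast
  then have "m \<in> maximal_elems le P" unfolding maximal_elems_iff by blast
  then obtain c where c: "c \<in> maximal_elems le Q" "modular_elem le (down le P m) c"
    using modular by blast
  let ?L = "down le P m"
  have cQ: "c \<in> Q" using c(1) unfolding maximal_elems_iff by blast
  have cL: "c \<in> ?L" using c(2) unfolding modular_elem_def by blast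
  then have cP: "c \<in> P" and cm: "le c m" unfolding down_def by auto
  have rk_c: "rk le P c = rank le Q"
    using Q.rk_maximal_elems_pure[OF pure c(1)] rk_order_ideal[OF Q Q_nonempty cQ] by simp
  note Q_le_c = le_maximal_elem_of_join_closed[OF join_closed Q_subset c(1) m(1) cm]
  define y where "y = meet le ?L c x"
  have xL: "x \<in> ?L" using x m unfolding down_def by blast
  have G: "is_glb le ?L {c, x} y" unfolding y_def using is_glb_meet_down[OF m(1) cL xL] .
  then have yP: "y \<in> P" and yc: "le y c" and yx: "le y x" unfolding is_glb_def down_def by auto
  have yQ: "y \<in> Q" using Q_down_closed cQ yP yc by blast
  have y_max: "le q y" if q: "q \<in> Q" "le q x" for q
  proof -
    have qP: "q \<in> P" using q Q_subset by blast
    have qm: "le q m" using trans_le[OF qP x(1) m(1) q(2) m(2)] .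
    then have "q \<in> ?L" using qP unfolding down_def by blast
    then show ?thesis using G Q_le_c[OF q(1) qm] q(2) unfolding is_glb_def by blast
  qed
  have "rk le P x \<le> Suc (rk le P y)"
    unfolding y_def using rk_le_Suc_rk_meet_modular[OF m(1) c(2) x(1) m(2)]
      rk_le_rank[OF m(1)] rk_P rk_c by simp
  moreover have "rk le P y < rk le P x" using rk_less[OF yP x(1) yx] yQ x(2) by blast
  ultimately show ?thesis using yQ yx y_max by (intro bexI[of _ y]) auto
qed

lemma TM_ideal_tm_step:
  assumes TM: "TM_ideal le P Q" and Q_nonempty: "Q \<noteq> {}" and Q_proper: "Q \<noteq> P"
    and rk_P: "rank le P = Suc (rank le Q)"
  shows "tm_step le P Q"
proof unfold_locales
  have M: "M_ideal le P Q" using TM unfolding TM_ideal_def by blast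
  then have Q: "order_ideal le P Q" and join_closed: "join_closed le P Q"
    unfolding M_ideal_def by blast+
  show "order_ideal le P Q" by (rule Q)
  show "Q \<noteq> {}" "Q \<noteq> P" by (fact Q_nonempty, fact Q_proper)
  have Q_down_closed: "\<forall>x\<in>Q. \<forall>y\<in>P. le y x \<longrightarrow> y \<in> Q" using Q unfolding order_ideal_def by blast
  show "\<exists>z. joins le P {b, w} = {z} \<and> rk le P z = Suc (rk le P w)"
    if b: "b \<in> atoms le P" "b \<notin> Q" and w: "w \<in> Q" for b w
  proof -
    have wP: "w \<in> P" using w Q unfolding order_ideal_def by blast
    have "b \<in> atoms le P - atoms le Q" using b atoms_order_ideal[OF Q Q_nonempty] by blast
    then have "card (joins le P {b, w}) = 1" using TM w unfolding TM_ideal_def by blast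
    then obtain z where z: "joins le P {b, w} = {z}" using card_1_singletonE by blast
    have "\<not> le b w" using b w Q_down_closed atom_in_P[OF b(1)] by blast
    with z show ?thesis using covers_joins_atom[OF b(1) wP] rk_covers by blast
  qed
  show "\<exists>y\<in>Q. le y x \<and> rk le P x = Suc (rk le P y) \<and> (\<forall>q\<in>Q. le q x \<longrightarrow> le q y)"
    if "x \<in> P" "x \<notin> Q" for x
    using M_ideal_ex_projection[OF M Q_nonempty rk_P that] .
  show "\<exists>b\<in>atoms le P. b \<notin> Q \<and> le b x" if x: "x \<in> P" "x \<notin> Q" for x
  proof (rule ccontr)
    assume "\<not> (\<exists>b\<in>atoms le P. b \<notin> Q \<and> le b x)"
    then have "{b\<in>atoms le P. le b x} \<subseteq> Q" by blast
    then show False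
      using mem_joins_atoms_below[OF x(1)] join_closed x(2) unfolding join_closed_def by blast
  qed
qed

end

section \<open>The subposets \<open>P(B)\<close>\<close>



locale geometric_tm_step = locally_geometric_poset le P + tm_step le P Q
  for le :: "'a \<Rightarrow> 'a \<Rightarrow> bool" and P Q +
  assumes Q_join_closed: "join_closed le P Q"
begin

lemma joins_subset_Q: "T \<subseteq> Q \<Longrightarrow> joins le P T \<subseteq> Q"
  using Q_join_closed unfolding join_closed_def by blast

lemma Q_subset_subposet_gen: "atoms le P \<inter> Q \<subseteq> B \<Longrightarrow> Q \<subseteq> subposet_gen le P B"
proof
  fix q assume B: "atoms le P \<inter> Q \<subseteq> B" and q: "q \<in> Q"
  then have "{b\<in>atoms le P. le b q} \<subseteq> B" using Q_down_closed[OF q] atom_in_P by blast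
  with q show "q \<in> subposet_gen le P B"
    using mem_subposet_gen_of_atoms_below Q_subset by blast
qed

lemma subposet_gen_eq_Q:
  assumes "atoms le P \<inter> Q \<subseteq> B" "B \<subseteq> Q"
  shows "subposet_gen le P B = Q"
proof
  show "Q \<subseteq> subposet_gen le P B" using Q_subset_subposet_gen[OF assms(1)] .
  show "subposet_gen le P B \<subseteq> Q"
  proof
    fix u assume "u \<in> subposet_gen le P B"
    then obtain T where "T \<subseteq> B" "u \<in> joins le P T" unfolding mem_subposet_gen_iff by blast
    then show "u \<in> Q" using joins_subset_Q[of T] assms(2) by blast
  qed
qed

end

locale intermediate_subposet = geometric_tm_step +
  fixes B :: "'a set"
  assumes B_old_atoms: "atoms le P \<inter> Q \<subseteq> B" and B_atoms: "B \<subseteq> atoms le P"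
    and B_new_atom: "B - Q \<noteq> {}"
begin

definition R :: "'a set" where
  "R = subposet_gen le P B"

lemma mem_R: "u \<in> R \<longleftrightarrow> (\<exists>T\<subseteq>B. u \<in> joins le P T)"
  unfolding R_def by (rule mem_subposet_gen_iff)

lemma R_subset: "R \<subseteq> P"
  unfolding R_def by (rule subposet_gen_subset)

lemma Q_subset_R: "Q \<subseteq> R"
  unfolding R_def using Q_subset_subposet_gen[OF B_old_atoms] .

lemma B_new_atoms: "B - Q \<subseteq> new_atoms"
  using B_atoms unfolding new_atoms_def by blast

lemma ex_new_atom_below_R:
  assumes "u \<in> R" "u \<notin> Q"
  shows "\<exists>b\<in>B - Q. le b u"
proof -
  obtain T where T: "T \<subseteq> B" "u \<in> joins le P T" using assms(1) mem_R by blast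
  then obtain t where "t \<in> T" "t \<notin> Q" using joins_subset_Q assms(2) by blast
  then show ?thesis using T unfolding mem_joins_iff by blast
qed

lemma atom_join_in_R:
  assumes b: "b \<in> B - Q" and w: "w \<in> Q"
  shows "atom_join b w \<in> R"
proof -
  have bE: "b \<in> new_atoms" using b B_new_atoms by blast
  have "{b, w} \<subseteq> P" using new_atom_in[OF bE] w Q_subset by blast
  moreover have "atom_join b w \<in> joins le P {b, w}" using joins_atom_join[OF bE w] by blast
  moreover have "c \<in> B" if c: "c \<in> atoms le P" "le c b \<or> le c w" for c
    using c le_atomD[of b c] b B_atoms atom_neq_bottom atom_in_P[OF c(1)] Q_down_closed[OF w]
      B_old_atoms by blast
  ultimately show ?thesis unfolding R_def by (intro mem_subposet_gen_of_joins) auto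
qed

lemma rk_covers_R_outside_Q:
  assumes c: "covers le R u v" and uQ: "u \<notin> Q" and vQ: "v \<notin> Q"
  shows "rk le P v = Suc (rk le P u)"
proof -
  have uR: "u \<in> R" and vR: "v \<in> R" and uv: "le u v" "u \<noteq> v"
    and no_between: "\<not> (\<exists>z\<in>R. lt le u z \<and> lt le z v)"
    using c unfolding covers_def lt_def by auto
  have uP: "u \<in> P" and vP: "v \<in> P" using uR vR R_subset by auto
  obtain b where b: "b \<in> B - Q" "le b u" using ex_new_atom_below_R[OF uR uQ] by blast
  have bE: "b \<in> new_atoms" using b B_new_atoms by blast
  have bv: "le b v" using trans_le[OF new_atom_in[OF bE] uP vP b(2) uv(1)] .
  have "lt le (proj u) (proj v)" using lt_iff_proj_lt[OF bE uP uQ b(2) vP vQ bv] uv unfolding lt_def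
    by blast
  then obtain w where w: "covers le P (proj u) w" "le w (proj v)"
    using ex_upper_cover proj_in_Q[OF uP uQ] proj_in_Q[OF vP vQ] Q_subset unfolding lt_def by blast
  have wQ: "w \<in> Q" using Q_down_closed[OF proj_in_Q[OF vP vQ] _ w(2)] w(1) unfolding covers_def
    by blast
  define z where "z = atom_join b w"
  have z: "z \<in> P" "z \<notin> Q" "le b z" "proj z = w"
    unfolding z_def using atom_join_in atom_join_notin_Q le_atom_join_atom proj_atom_join bE wQ
      by auto
  have "lt le u z" using lt_iff_proj_lt[OF bE uP uQ b(2) z(1-3)] w(1) z(4) unfolding covers_def
    by simp
  moreover have "le z v" using le_iff_proj_le[OF bE z(1-3) vP vQ bv] w(2) z(4) by simp
  moreover have "z \<in> R" unfolding z_def using atom_join_in_R[OF b(1) wQ] .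
  ultimately have "z = v" using no_between unfolding lt_def by blast
  then have "rk le P v = Suc (rk le P w)" using rk_atom_join[OF bE wQ] unfolding z_def by simp
  also have "rk le P w = Suc (rk le P (proj u))" using rk_covers[OF w(1)] .
  finally show ?thesis using rk_proj[OF uP uQ] by simp
qed

lemma rk_covers_R:
  assumes c: "covers le R u v"
  shows "rk le P v = Suc (rk le P u)"
proof -
  have uR: "u \<in> R" and vR: "v \<in> R" and uv: "le u v" "u \<noteq> v"
    and no_between: "\<not> (\<exists>z\<in>R. lt le u z \<and> lt le z v)"
    using c unfolding covers_def lt_def by auto
  have uP: "u \<in> P" and vP: "v \<in> P" using uR vR R_subset by auto
  consider "v \<in> Q" | "u \<in> Q" "v \<notin> Q" | "u \<notin> Q" "v \<notin> Q" by blast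
  then show ?thesis
  proof cases
    case 1
    have "covers le P u v" unfolding covers_def
    proof (intro conjI uP vP notI)
      show "lt le u v" using uv unfolding lt_def by blast
      assume "\<exists>z\<in>P. lt le u z \<and> lt le z v"
      then obtain z where "z \<in> P" "lt le u z" "lt le z v" by blast
      then show False using Q_down_closed[OF 1] no_between Q_subset_R unfolding lt_def by blast
    qed
    then show ?thesis using rk_covers by blast
  next
    case 2
    note pv = proj_in_Q[OF vP 2(2)] proj_le[OF vP 2(2)]
    have "le u (proj v)" using le_proj[OF vP 2(2) 2(1) uv(1)] .
    moreover have "proj v \<in> R" "proj v \<noteq> v" using pv Q_subset_R 2(2) by auto
    ultimately have "u = proj v" using no_between pv(2) unfolding lt_def by blast
    then show ?thesis using rk_proj[OF vP 2(2)] by simp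
  next
    case 3
    then show ?thesis using rk_covers_R_outside_Q[OF c] by blast
  qed
qed

lemma rk_cover_chain_R: "cover_chain le R u x n \<Longrightarrow> rk le P x = rk le P u + n"
  by (induction rule: cover_chain.induct) (auto dest: rk_covers_R)

lemma bottom_in_R: "bottom \<in> R"
  using Q_subset_R bottom_in_Q by blast

lemma bot_R: "bot le R = bottom"
  unfolding bot_def minimal_elems_subset[OF R_subset bottom_in_R] by simp

lemma length_satchain_R:
  assumes "satchain le R cs x"
  shows "length cs = Suc (rk le P x)"
proof -
  have cs: "cs \<noteq> []" "hd cs = bottom" "last cs = x"
    "\<forall>i. Suc i < length cs \<longrightarrow> covers le R (cs ! i) (cs ! Suc i)"
    using assms bot_R unfolding satchain_def by auto
  have "cover_chain le R bottom x (length cs - 1)" using cover_chain_of_list[OF cs(1) cs(4)] cs(2,3)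
    by simp
  then have "rk le P x = length cs - 1" using rk_cover_chain_R rk_bottom by simp
  then show ?thesis using cs(1) by simp
qed

lemma ranked_poset_R: "ranked_poset le R"
proof
  show "is_poset le R"
    by (rule is_poset_subset[OF R_subset bottom_in_R]) (simp add: length_satchain_R)
qed

lemma rk_R:
  assumes "x \<in> R"
  shows "rk le R x = rk le P x"
proof -
  have "cover_chain le R bottom x (rk le R x)"
    using ranked_poset.cover_chain_bottom_rk[OF ranked_poset_R assms] bot_R by simp
  from rk_cover_chain_R[OF this] show ?thesis using rk_bottom by simp
qed

lemma atoms_R: "atoms le R = B"
proof
  show "atoms le R \<subseteq> B"
  proof
    fix x assume x: "x \<in> atoms le R"
    then have xR: "x \<in> R" unfolding atoms_def by blast
    then have xat: "x \<in> atoms le P" using x rk_R R_subset unfolding atoms_def by auto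
    obtain T where T: "T \<subseteq> B" "x \<in> joins le P T" using xR mem_R by blast
    have "T \<noteq> {}" using T joins_empty atom_neq_bottom[OF xat] by auto
    then obtain t where t: "t \<in> T" by blast
    have tat: "t \<in> atoms le P" using t T B_atoms by blast
    have "le t x" using T t unfolding mem_joins_iff by blast
    then have "t = bottom \<or> t = x" using le_atomD[OF xat atom_in_P[OF tat]] by blast
    then show "x \<in> B" using atom_neq_bottom[OF tat] t T by blast
  qed
  show "B \<subseteq> atoms le R"
  proof
    fix b assume b: "b \<in> B"
    then have bat: "b \<in> atoms le P" using B_atoms by blast
    have "b \<in> R" unfolding mem_R using joins_self[OF atom_in_P[OF bat]] b by blast
    then show "b \<in> atoms le R" using rk_R bat unfolding atoms_def by simp
  qed
qed

lemma joins_R_eq: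
  assumes "T \<subseteq> R" "joins le P T \<subseteq> R"
  shows "joins le R T = joins le P T"
proof
  show "joins le P T \<subseteq> joins le R T"
  proof
    fix j assume j: "j \<in> joins le P T"
    then have "j \<in> R" using assms(2) by blast
    with j show "j \<in> joins le R T" using R_subset unfolding mem_joins_iff by blast
  qed
  show "joins le R T \<subseteq> joins le P T"
  proof
    fix j assume j: "j \<in> joins le R T"
    then have jR: "j \<in> R" and jT: "\<forall>t\<in>T. le t j"
      and jmin: "\<forall>s\<in>R. (\<forall>t\<in>T. le t s) \<longrightarrow> le s j \<longrightarrow> s = j"
      unfolding mem_joins_iff by auto
    obtain j' where j': "j' \<in> joins le P T" "le j' j"
      using ex_joins_below_upper_bound[of j T] jR jT R_subset by blast
    have "j' \<in> R" using j'(1) assms(2) by blast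
    moreover have "\<forall>t\<in>T. le t j'" using j'(1) unfolding mem_joins_iff by blast
    ultimately have "j' = j" using jmin j'(2) by blast
    with j'(1) show "j \<in> joins le P T" by simp
  qed
qed

lemma tm_step_R: "tm_step le R Q"
proof -
  interpret R: ranked_poset le R by (rule ranked_poset_R)
  show ?thesis
  proof
    show "order_ideal le R Q"
      using Q_subset_R Q_down_closed R_subset unfolding order_ideal_def by blast
    show "Q \<noteq> {}" by (rule Q_nonempty)
    obtain b where "b \<in> B" "b \<notin> Q" using B_new_atom by blast
    then show "Q \<noteq> R" using atoms_R unfolding atoms_def by blast
  next
    fix b w assume b: "b \<in> atoms le R" "b \<notin> Q" and w: "w \<in> Q"
    have bB: "b \<in> B - Q" using b atoms_R by blast
    have bE: "b \<in> new_atoms" using bB B_new_atoms by blast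
    have "b \<in> R" "w \<in> R" using b(1) w Q_subset_R unfolding atoms_def by auto
    then have "joins le R {b, w} = {atom_join b w}"
      using joins_R_eq[of "{b, w}"] joins_atom_join[OF bE w] atom_join_in_R[OF bB w] by auto
    moreover have "rk le R (atom_join b w) = Suc (rk le R w)"
      using rk_atom_join[OF bE w] rk_R atom_join_in_R[OF bB w] \<open>w \<in> R\<close> by simp
    ultimately show "\<exists>z. joins le R {b, w} = {z} \<and> rk le R z = Suc (rk le R w)" by blast
  next
    fix x assume x: "x \<in> R" "x \<notin> Q"
    have xP: "x \<in> P" using x R_subset by blast
    have "proj x \<in> R" using proj_in_Q[OF xP x(2)] Q_subset_R by blast
    then have "rk le R x = Suc (rk le R (proj x))" using rk_R x rk_proj[OF xP x(2)] by simp
    then show "\<exists>y\<in>Q. le y x \<and> rk le R x = Suc (rk le R y) \<and> (\<forall>q\<in>Q. le q x \<longrightarrow> le q y)"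
      using proj_in_Q[OF xP x(2)] proj_le[OF xP x(2)] le_proj[OF xP x(2)] by blast
  next
    fix x assume "x \<in> R" "x \<notin> Q"
    then show "\<exists>b\<in>atoms le R. b \<notin> Q \<and> le b x" using ex_new_atom_below_R atoms_R by blast
  qed
qed

lemma subposet_gen_R_delete:
  "subposet_gen le R (atoms le R - {a}) = subposet_gen le P (B - {a})"
proof -
  have "joins le R T = joins le P T" if "T \<subseteq> B - {a}" for T
  proof (rule joins_R_eq)
    show "T \<subseteq> R" using that atoms_R unfolding atoms_def by blast
    show "joins le P T \<subseteq> R"
    proof
      fix u assume "u \<in> joins le P T"
      with that show "u \<in> R" unfolding mem_R by blast
    qed
  qed
  then have "{joins le R T | T. T \<subseteq> B - {a} \<and> T \<noteq> {}} = {joins le P T | T. T \<subseteq> B - {a} \<and> T \<noteq> {}}"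
    by blast
  then show ?thesis unfolding subposet_gen_def atoms_R bot_R by simp
qed

end



context intermediate_subposet
begin

lemma B_subset: "B \<subseteq> P"
  using B_atoms atom_in_P by blast

lemma is_lub_join_down_R:
  assumes x: "x \<in> R" and u: "u \<in> down le R x" and v: "v \<in> down le R x"
  shows "is_lub le (down le R x) {u, v} (join le (down le P x) u v)"
proof -
  define s where "s = join le (down le P x) u v"
  have xP: "x \<in> P" using x R_subset by blast
  have uR: "u \<in> R" "le u x" and vR: "v \<in> R" "le v x" using u v unfolding down_def by auto
  have "u \<in> down le P x" "v \<in> down le P x" using uR vR R_subset unfolding down_def by auto
  from is_lub_join_down[OF xP this] have S: "is_lub le (down le P x) {u, v} s" unfolding s_def .
  obtain Tu where Tu: "Tu \<subseteq> B" "u \<in> joins le P Tu" using uR mem_R by blast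
  obtain Tv where Tv: "Tv \<subseteq> B" "v \<in> joins le P Tv" using vR mem_R by blast
  have "s \<in> joins le P (Tu \<union> Tv)"
    unfolding s_def using join_down_mem_joins_Un[OF xP Tu(2) uR(2) Tv(2) vR(2)] Tu Tv B_subset
      by blast
  moreover have "Tu \<union> Tv \<subseteq> B" using Tu Tv by blast
  ultimately have "s \<in> R" unfolding mem_R by blast
  moreover have sM: "s \<in> down le P x" and us: "le u s" and vs: "le v s"
    using S unfolding is_lub_def by auto
  ultimately have sL: "s \<in> down le R x" unfolding down_def by blast
  have least: "le s w" if "w \<in> down le P x" "le u w" "le v w" for w
    using S that unfolding is_lub_def by blast
  show ?thesis
    unfolding s_def[symmetric] is_lub_def
  proof (intro conjI ballI impI sL)
    show "\<And>t. t \<in> {u, v} \<Longrightarrow> le t s" using us vs by blast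
    fix w assume "w \<in> down le R x" "\<forall>t\<in>{u, v}. le t w"
    then show "le s w" using least R_subset unfolding down_def by blast
  qed
qed

lemma join_down_R_eq:
  assumes "x \<in> R" "u \<in> down le R x" "v \<in> down le R x"
  shows "join le (down le R x) u v = join le (down le P x) u v"
proof (rule join_eqI[OF is_lub_join_down_R[OF assms]])
  show "down le R x \<subseteq> P" using R_subset unfolding down_def by blast
qed

lemma atoms_down_R: "x \<in> R \<Longrightarrow> atoms le (down le R x) = {b\<in>B. le b x}"
  using ranked_poset.atoms_down[OF ranked_poset_R] atoms_R by blast

lemma covers_down_R_iff:
  assumes x: "x \<in> R" and u: "u \<in> down le R x" and v: "v \<in> down le R x"
  shows "covers le (down le R x) u v \<longleftrightarrow>
    (\<exists>a\<in>atoms le (down le R x). \<not> le a u \<and> v = join le (down le R x) u a)"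
proof
  let ?L = "down le R x"
  have xP: "x \<in> P" using x R_subset by blast
  assume cv: "covers le ?L u v"
  have uv: "le u v" "u \<noteq> v" and no_between: "\<not> (\<exists>z\<in>?L. lt le u z \<and> lt le z v)"
    using cv unfolding covers_def lt_def by auto
  have uP: "u \<in> P" and vR: "v \<in> R" "le v x" using u v R_subset unfolding down_def by auto
  obtain Tv where Tv: "Tv \<subseteq> B" "v \<in> joins le P Tv" using vR mem_R by blast
  then obtain t where t: "t \<in> Tv" "\<not> le t u" using uP uv unfolding mem_joins_iff by blast
  have tB: "t \<in> B" and tv: "le t v" using t Tv unfolding mem_joins_iff by blast+
  have tx: "le t x" using trans_le[OF _ _ xP tv vR(2)] tB B_subset vR(1) R_subset by blast
  have tat: "t \<in> atoms le ?L" using atoms_down_R[OF x] tB tx by blast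
  then have tL: "t \<in> ?L" unfolding atoms_def by blast
  define s where "s = join le ?L u t"
  have S: "is_lub le ?L {u, t} s"
    unfolding s_def join_down_R_eq[OF x u tL] using is_lub_join_down_R[OF x u tL] .
  then have "s \<in> ?L" "le u s" "le t s" "le s v" using v uv(1) tv unfolding is_lub_def by auto
  then have "s = v" using no_between t(2) unfolding lt_def by blast
  then show "\<exists>a\<in>atoms le ?L. \<not> le a u \<and> v = join le ?L u a" using tat t(2) unfolding s_def by blast
next
  let ?L = "down le R x" and ?M = "down le P x"
  have xP: "x \<in> P" using x R_subset by blast
  assume "\<exists>a\<in>atoms le ?L. \<not> le a u \<and> v = join le ?L u a"
  then obtain a where a: "a \<in> atoms le ?L" "\<not> le a u" "v = join le ?L u a" by blast
  have aL: "a \<in> ?L" using a(1) unfolding atoms_def by blast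
  have aM: "a \<in> atoms le ?M" using a(1) atoms_down_R[OF x] atoms_down[OF xP] B_atoms by blast
  have "v = join le ?M u a" using a(3) join_down_R_eq[OF x u aL] by simp
  moreover have "u \<in> ?M" "v \<in> ?M" using u v R_subset unfolding down_def by auto
  ultimately have "covers le ?M u v"
    using geometric_down[OF xP] aM a(2) unfolding geometric_lattice_def by blast
  then show "covers le ?L u v" using u v R_subset unfolding covers_def down_def by blast
qed

lemma locally_geometric_R: "locally_geometric le R"
  unfolding locally_geometric_def
proof (intro conjI ballI)
  interpret R: ranked_poset le R by (rule ranked_poset_R)
  show "is_poset le R" by (rule R.poset)
  fix x assume x: "x \<in> R"
  interpret L: ranked_poset le "down le R x" using R.ranked_poset_down[OF x] .
  have lub: "\<exists>s. is_lub le (down le R x) {u, v} s" if "u \<in> down le R x" "v \<in> down le R x" for u v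
    using is_lub_join_down_R[OF x that] by blast
  show "geometric_lattice le (down le R x)"
    unfolding geometric_lattice_def is_lattice_def
  proof (intro conjI ballI)
    show "is_poset le (down le R x)" by (rule L.poset)
    fix u v assume uv: "u \<in> down le R x" "v \<in> down le R x"
    show "\<exists>s. is_lub le (down le R x) {u, v} s" using lub[OF uv] .
    show "\<exists>s. is_glb le (down le R x) {u, v} s" using L.ex_glb_of_ex_lub[OF lub uv] .
    show "covers le (down le R x) u v \<longleftrightarrow>
      (\<exists>a\<in>atoms le (down le R x). \<not> le a u \<and> v = join le (down le R x) u a)"
      by (rule covers_down_R_iff[OF x uv])
  qed
qed

end

section \<open>Inductiveness\<close>

context geometric_tm_step
begin

lemma charpoly_Q_dvd_subposet_gen:
  assumes "atoms le P \<inter> Q \<subseteq> B" "B \<subseteq> atoms le P"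
  shows "charpoly le Q dvd charpoly le (subposet_gen le P B)"
proof (cases "B \<subseteq> Q")
  case True
  then show ?thesis using subposet_gen_eq_Q[OF assms(1)] by simp
next
  case False
  interpret intermediate_subposet le P Q B
    by unfold_locales (use assms False in auto)
  interpret R: tm_step le R Q by (rule tm_step_R)
  show ?thesis using R.charpoly_factor unfolding R_def by simp
qed

lemma inductive_subposet_gen:
  assumes Q: "inductive_poset le Q" and B: "atoms le P \<inter> Q \<subseteq> B" "B \<subseteq> atoms le P"
  shows "inductive_poset le (subposet_gen le P B)"
  using B
proof (induction "card (B - Q)" arbitrary: B)
  case 0
  have "B - Q \<subseteq> P" using 0(3) atom_in_P by blast
  with 0 have "B \<subseteq> Q" using finite_subset[OF _ finite_carrier] by fastforce
  then show ?case using subposet_gen_eq_Q[OF 0(2)] Q by simp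
next
  case (Suc k)
  have fin: "finite (B - Q)" using Suc.prems(2) atom_in_P finite_subset[OF _ finite_carrier]
    by blast
  have "B - Q \<noteq> {}" using Suc.hyps(2) by (metis card.empty nat.distinct(1))
  then obtain a where a: "a \<in> B" "a \<notin> Q" by blast
  interpret intermediate_subposet le P Q B
    by unfold_locales (use Suc.prems a in auto)
  interpret R: tm_step le R Q by (rule tm_step_R)
  have aR: "a \<in> atoms le R" and aE: "a \<in> R.new_atoms"
    using a atoms_R unfolding R.new_atoms_def by auto
  note iso = R.order_iso_atom_join[OF aE]
  have B': "atoms le P \<inter> Q \<subseteq> B - {a}" "B - {a} \<subseteq> atoms le P"
    using Suc.prems a by auto
  have "B - {a} - Q = (B - Q) - {a}" by blast
  then have "card (B - {a} - Q) = k" using Suc.hyps(2) fin a by (simp add: card_Diff_singleton)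
  then have "inductive_poset le (subposet_gen le P (B - {a}))" using Suc.hyps(1) B' by blast
  moreover have "charpoly le Q dvd charpoly le (subposet_gen le P (B - {a}))"
    using charpoly_Q_dvd_subposet_gen[OF B'] .
  moreover have "charpoly le (up le R a) = charpoly le Q"
    using order_iso.charpoly_image[OF iso ranked_poset.poset[OF ranked_poset_Q]] .
  ultimately have "inductive_poset le R"
    using inductive_poset.step[OF locally_geometric_R aR inductive_poset_order_iso[OF Q iso]]
      subposet_gen_R_delete by simp
  then show ?case unfolding R_def .
qed

end

context locally_geometric_poset
begin

lemma inductive_poset_of_TM_ideal:
  assumes TM: "TM_ideal le P Q" and Q: "Q \<noteq> {}" "Q \<noteq> P" and rk: "rank le P = Suc (rank le Q)"
    and Q_inductive: "inductive_poset le Q"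
  shows "inductive_poset le P"
proof -
  interpret tm_step le P Q using TM_ideal_tm_step[OF TM Q rk] .
  interpret geometric_tm_step le P Q
    by unfold_locales (use TM in \<open>simp add: TM_ideal_def M_ideal_def\<close>)
  show ?thesis
    using inductive_subposet_gen[OF Q_inductive _ subset_refl] subposet_gen_atoms by simp
qed

lemma locally_geometric_order_ideal:
  assumes Q: "order_ideal le P Q" "Q \<noteq> {}"
  shows "locally_geometric le Q"
  unfolding locally_geometric_def
proof (intro conjI ballI)
  show "is_poset le Q" using ranked_poset.poset[OF ranked_poset_order_ideal[OF Q]] .
  fix x assume x: "x \<in> Q"
  have "down le Q x = down le P x"
    using x Q(1) unfolding order_ideal_def down_def by blast
  with x show "geometric_lattice le (down le Q x)"
    using geometric_down Q(1) unfolding order_ideal_def by auto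
qed

lemma inductive_poset_rank_0:
  assumes "rank le P = 0"
  shows "inductive_poset le P"
proof -
  have "P = {bottom}" using rk_eq_0D rk_le_rank assms bot_in by fastforce
  then show ?thesis using inductive_poset.base[of le bottom] refl_le[OF bot_in] by simp
qed

end

lemma locally_geometric_iff: "locally_geometric le P \<longleftrightarrow> locally_geometric_poset le P"
  unfolding locally_geometric_def locally_geometric_poset_def locally_geometric_poset_axioms_def
    ranked_poset_def by blast

lemma strictly_supersolvable_coatom_ideal:
  assumes LG: "locally_geometric le P" and SS: "strictly_supersolvable le P" and rk: "rank le P = Suc r"
  obtains Q where "TM_ideal le P Q" "Q \<noteq> {}" "Q \<noteq> P" "rank le Q = r"
    "locally_geometric le Q" "strictly_supersolvable le Q"
proof -
  interpret locally_geometric_poset le P using LG locally_geometric_iff by blast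
  obtain C where C: "C 0 = {bottom}" "C (rank le P) = P"
    "\<forall>i < rank le P. C i \<subset> C (Suc i) \<and> TM_ideal le (C (Suc i)) (C i)"
    "\<forall>i \<le> rank le P. rank le (C i) = i"
    using SS unfolding strictly_supersolvable_def by blast
  have "r < rank le P" using rk by simp
  then have TM: "TM_ideal le P (C r)" and QP: "C r \<noteq> P" using C(2,3) rk by auto
  have rQ: "rank le (C r) = r" using C(4) rk by simp
  have "C 0 \<subseteq> C i" if "i \<le> r" for i
    using that
  proof (induction i)
    case (Suc i)
    then have "C i \<subset> C (Suc i)" using C(3) rk by simp
    with Suc show ?case by simp
  qed simp
  then have Q_ne: "C r \<noteq> {}" using C(1) by blast
  have Q_ideal: "order_ideal le P (C r)" using TM unfolding TM_ideal_def M_ideal_def by blast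
  have "locally_geometric le (C r)" using locally_geometric_order_ideal[OF Q_ideal Q_ne] .
  moreover have "strictly_supersolvable le (C r)"
    unfolding strictly_supersolvable_def
  proof (intro exI[of _ C] conjI)
    show "C 0 = {bot le (C r)}" using C(1) bot_order_ideal[OF Q_ideal Q_ne] by simp
    show "C (rank le (C r)) = C r" using rQ by simp
    show "\<forall>i<rank le (C r). C i \<subset> C (Suc i) \<and> TM_ideal le (C (Suc i)) (C i)"
      using C(3) rQ rk by simp
    show "\<forall>i\<le>rank le (C r). rank le (C i) = i" using C(4) rQ rk by simp
  qed
  ultimately show ?thesis using that TM Q_ne QP rQ by blast
qed

theorem theorem1p3:
  fixes le :: "'a \<Rightarrow> 'a \<Rightarrow> bool" and P :: "'a set"
  assumes "locally_geometric le P"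
    and "strictly_supersolvable le P"
  shows "inductive_poset le P"
  using assms
proof (induction "rank le P" arbitrary: P)
  case 0
  then interpret locally_geometric_poset le P using locally_geometric_iff by blast
  show ?case using inductive_poset_rank_0 "0.hyps" by simp
next
  case (Suc r)
  then interpret locally_geometric_poset le P using locally_geometric_iff by blast
  obtain Q where Q: "TM_ideal le P Q" "Q \<noteq> {}" "Q \<noteq> P" "rank le Q = r"
    and Q_inductive: "inductive_poset le Q"
    using strictly_supersolvable_coatom_ideal[OF Suc.prems Suc.hyps(2)[symmetric]] Suc.hyps(1)
      by metis
  show ?case
    using inductive_poset_of_TM_ideal[OF Q(1-3) _ Q_inductive] Q(4) Suc.hyps(2) by simp
qed

end
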